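(* Let $\omega=U_\alpha\,\mathrm{d}x^\alpha\in\Omega^1_\lambda(J^\infty)\otimes\mathfrak{g}$ be the spectral one-form of a jet linear spectral problem $D_\alpha\Phi=U_\alpha\Phi$ which is associated only with the solutions of $\Delta(j^p_xu)=0$ satisfying an additional condition, the set of such solutions having infinite prolongation $\mathcal{E}_2^\infty\subset\mathcal{E}^\infty$. Let $\Phi\in C^\infty_\lambda(J^\infty)\otimes G$ satisfy $D_\alpha\Phi=U_\alpha\Phi$ at all points of $\mathcal{E}_2^\infty$ and all $\lambda\in\Lambda$, and let $X_R$ be a generalized symmetry of $\Delta(j^p_xu)=0$. Define $$\Upsilon^{FG'}:=\mathcal{L}_{\mathrm{pr}X_R}\omega+\Big(\big(\mathrm{pr}X_R(D_\alpha\Phi-U_\alpha\Phi)\big)\Phi^{-1}\Big)\mathrm{d}x^\alpha.$$ Then $F^{FG'}:=\Phi^{-1}(\mathrm{pr}X_R\,\Phi)\in C^\infty_\lambda(\mathcal{E}_2^\infty)\otimes\mathfrak{g}$ is an immersion formula for $\Upsilon^{FG'}$, i.e. $\mathbf{d}F^{FG'}=\mathrm{Ad}_{\Phi^{-1}}\Upsilon^{FG'}$ on $\mathcal{E}_2^\infty$.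
   Context: $G$ is a matrix Lie group with matrix Lie algebra $\mathfrak{g}$. $J^\infty$ is the infinite jet space of $M\times N\to M$ ($M$ with coordinates $x^1,\dots,x^m$, $N$ with coordinates $u^i$), coordinates $x^\alpha,u^i,u^i_J$, points $[u]$; $D_\alpha=\partial_{x^\alpha}+u^i_{J,\alpha}\partial/\partial u^i_J$. $\mathcal{E}^\infty\subset J^\infty$ is defined by $D_J\Delta^\mu=0$ for all multi-indices $J$, for a fixed locally solvable maximal-rank system $\Delta^\mu(j^p_xu)=0$; $\mathcal{E}_2^\infty$ is defined analogously for the system augmented by the additional condition, and the $D_\alpha$ are tangent to it. $\Lambda\subset\mathbb{C}$ is a one-dimensional submanifold with coordinate $\lambda$; $C^\infty_\lambda$ denotes smooth functions of $([u],\lambda)$ depending on finitely many jet coordinates. Spectral forms are $\vartheta_J([u],\lambda)\mathrm{d}x^J$, $\vartheta_J\in C^\infty_\lambda\otimes\mathfrak{g}$. $\mathbf{d}(\vartheta_J\mathrm{d}x^J):=(D_\alpha\vartheta_J)\mathrm{d}x^\alpha\wedge\mathrm{d}x^J$; $\mathrm{Ad}_{\Phi^{-1}}$ conjugates coefficients, $X\mapsto\Phi^{-1}X\Phi$. A generalized vector field $X_R=R^i([u])\partial_{u^i}$ has prolongation $\mathrm{pr}X_R=\sum_J(D_JR^i)\partial/\partial u^i_J$, and is a generalized symmetry of $\Delta=0$ iff $\mathrm{pr}X_R$ is tangent to $\mathcal{E}^\infty$. $\mathcal{L}_{\mathrm{pr}X_R}\omega:=(\mathrm{pr}X_R(U_\alpha))\mathrm{d}x^\alpha$;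 $\mathrm{pr}X_R$ acts on matrix-valued functions entrywise. *)

theory Defs
  imports "HOL-Analysis.Analysis" "HOL-Library.Multiset"
begin

text \<open>Coordinates of the infinite jet space: x^alpha (alpha in 'm) and u^i_J
  (i in 'n, J a symmetric multi-index, i.e. a multiset over 'm; u^i = u^i_{empty}).\<close>
datatype ('m, 'n) jcoord = Xc 'm | Uc 'n "'m multiset"

type_synonym ('m, 'n) jpt = "('m, 'n) jcoord \<Rightarrow> real"

definition pdv :: "'c \<Rightarrow> (('c \<Rightarrow> real) \<Rightarrow> 'a::real_normed_vector) \<Rightarrow> ('c \<Rightarrow> real) \<Rightarrow> 'a" where
  "pdv c f p = vector_derivative (\<lambda>t. f (p(c := t))) (at (p c))"

text \<open>Smooth functions on an open set U of a coordinate space 'c => real, depending on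
  finitely many coordinates: continuous, all partial derivatives exist and are again
  smooth (all iterated partial derivatives exist and are continuous).\<close>
coinductive smooth_fs :: "('c \<Rightarrow> real) set \<Rightarrow> (('c \<Rightarrow> real) \<Rightarrow> 'a::real_normed_vector) \<Rightarrow> bool"
  for U where
  "(\<exists>S. finite S \<and> (\<forall>p\<in>U. \<forall>q\<in>U. (\<forall>c\<in>S. p c = q c) \<longrightarrow> f p = f q))
   \<Longrightarrow> continuous_on U f
   \<Longrightarrow> (\<forall>c. \<forall>p\<in>U. (\<lambda>t. f (p(c := t))) differentiable (at (p c)))
   \<Longrightarrow> (\<forall>c. smooth_fs U (pdv c f))
   \<Longrightarrow> smooth_fs U f"

text \<open>Total derivative D_alpha = d/dx^alpha + u^i_{J,alpha} d/du^i_J (the sum is finite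
  for functions depending on finitely many coordinates).\<close>
definition totD :: "'m \<Rightarrow> (('m, 'n) jpt \<Rightarrow> 'a::real_normed_vector) \<Rightarrow> ('m, 'n) jpt \<Rightarrow> 'a" where
  "totD \<alpha> f p = pdv (Xc \<alpha>) f p +
     (\<Sum>(i, J) \<in> {(i, J). pdv (Uc i J) f p \<noteq> 0}. p (Uc i (add_mset \<alpha> J)) *\<^sub>R pdv (Uc i J) f p)"

definition totDJ :: "'m::linorder multiset \<Rightarrow> (('m, 'n) jpt \<Rightarrow> 'a::real_normed_vector) \<Rightarrow> ('m, 'n) jpt \<Rightarrow> 'a" where
  "totDJ J f = foldr totD (sorted_list_of_multiset J) f"

text \<open>Prolongation of the generalized (evolutionary) vector field X_R = R^i d/du^i:
  pr X_R = sum_J (D_J R^i) d/du^i_J, acting entrywise on vector/matrix valued functions.\<close>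
definition prX :: "('n \<Rightarrow> ('m::linorder, 'n) jpt \<Rightarrow> real) \<Rightarrow> (('m, 'n) jpt \<Rightarrow> 'a::real_normed_vector) \<Rightarrow> ('m, 'n) jpt \<Rightarrow> 'a" where
  "prX R f p = (\<Sum>(i, J) \<in> {(i, J). pdv (Uc i J) f p \<noteq> 0}. totDJ J (R i) p *\<^sub>R pdv (Uc i J) f p)"

definition jet_order_le :: "nat \<Rightarrow> (('m, 'n) jpt \<Rightarrow> 'a) \<Rightarrow> bool" where
  "jet_order_le p f \<longleftrightarrow> (\<forall>q q'. (\<forall>\<alpha>. q (Xc \<alpha>) = q' (Xc \<alpha>)) \<and>
      (\<forall>i J. size J \<le> p \<longrightarrow> q (Uc i J) = q' (Uc i J)) \<longrightarrow> f q = f q')"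

definition prolong :: "('mu \<Rightarrow> ('m::linorder, 'n) jpt \<Rightarrow> real) \<Rightarrow> ('m, 'n) jpt set" where
  "prolong \<Delta> = {q. \<forall>\<mu> J. totDJ J (\<Delta> \<mu>) q = 0}"

definition maximal_rank :: "('mu::finite \<Rightarrow> ('m, 'n) jpt \<Rightarrow> real) \<Rightarrow> bool" where
  "maximal_rank \<Delta> \<longleftrightarrow> (\<forall>q. (\<forall>\<mu>. \<Delta> \<mu> q = 0) \<longrightarrow>
     (\<forall>a :: 'mu \<Rightarrow> real. (\<forall>c. (\<Sum>\<mu>\<in>UNIV. a \<mu> * pdv c (\<Delta> \<mu>) q) = 0) \<longrightarrow> (\<forall>\<mu>. a \<mu> = 0)))"

definition pdJ :: "'m::linorder multiset \<Rightarrow> (('m \<Rightarrow> real) \<Rightarrow> real) \<Rightarrow> ('m \<Rightarrow> real) \<Rightarrow> real" where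
  "pdJ J g = foldr pdv (sorted_list_of_multiset J) g"

definition jet :: "(('m::linorder \<Rightarrow> real) \<Rightarrow> 'n \<Rightarrow> real) \<Rightarrow> ('m \<Rightarrow> real) \<Rightarrow> ('m, 'n) jpt" where
  "jet f x c = (case c of Xc \<alpha> \<Rightarrow> x \<alpha> | Uc i J \<Rightarrow> pdJ J (\<lambda>y. f y i) x)"

definition locally_solvable :: "nat \<Rightarrow> ('mu \<Rightarrow> ('m::{finite,linorder}, 'n) jpt \<Rightarrow> real) \<Rightarrow> bool" where
  "locally_solvable p \<Delta> \<longleftrightarrow> (\<forall>q. (\<forall>\<mu>. \<Delta> \<mu> q = 0) \<longrightarrow>
     (\<exists>V f. open V \<and> (\<lambda>\<alpha>. q (Xc \<alpha>)) \<in> V \<and> (\<forall>i. smooth_fs V (\<lambda>x. f x i)) \<and>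
        (\<forall>x\<in>V. \<forall>\<mu>. \<Delta> \<mu> (jet f x) = 0) \<and>
        (\<forall>i J. size J \<le> p \<longrightarrow> jet f (\<lambda>\<alpha>. q (Xc \<alpha>)) (Uc i J) = q (Uc i J))))"

definition tangent_to :: "('n \<Rightarrow> ('m::linorder, 'n) jpt \<Rightarrow> real) \<Rightarrow> ('m, 'n) jpt set \<Rightarrow> bool" where
  "tangent_to R E \<longleftrightarrow> (\<forall>f :: ('m, 'n) jpt \<Rightarrow> real. smooth_fs UNIV f \<and> (\<forall>q\<in>E. f q = 0)
       \<longrightarrow> (\<forall>q\<in>E. prX R f q = 0))"

definition gen_symmetry :: "('mu \<Rightarrow> ('m::linorder, 'n) jpt \<Rightarrow> real) \<Rightarrow> ('n \<Rightarrow> ('m, 'n) jpt \<Rightarrow> real) \<Rightarrow> bool" where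
  "gen_symmetry \<Delta> R \<longleftrightarrow> tangent_to R (prolong \<Delta>)"

definition matrix_lie_group :: "(complex^'k^'k) set \<Rightarrow> bool" where
  "matrix_lie_group G \<longleftrightarrow> G \<subseteq> {A. invertible A} \<and> mat 1 \<in> G \<and>
     (\<forall>A\<in>G. \<forall>B\<in>G. A ** B \<in> G) \<and> (\<forall>A\<in>G. matrix_inv A \<in> G) \<and>
     closedin (top_of_set {A. invertible A}) G"

definition lie_algebra :: "(complex^'k^'k) set \<Rightarrow> (complex^'k^'k) set" where
  "lie_algebra G = {X. \<exists>\<gamma> \<epsilon>. \<epsilon> > 0 \<and> (\<forall>t. \<bar>t\<bar> < \<epsilon> \<longrightarrow> \<gamma> t \<in> G) \<and> \<gamma> 0 = mat 1 \<and>
                         (\<gamma> has_vector_derivative X) (at 0)}"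

end

theory Submission
  imports Defs
begin

text \<open>Write \<open>F = \<Phi>\<^sup>-\<^sup>1 pr X\<^sub>R \<Phi>\<close>. The Leibniz rule for \<open>D\<^sub>\<alpha>\<close>, the formula
  \<open>D\<^sub>\<alpha> \<Phi>\<^sup>-\<^sup>1 = - \<Phi>\<^sup>-\<^sup>1 (D\<^sub>\<alpha> \<Phi>) \<Phi>\<^sup>-\<^sup>1\<close> and the fact that the prolongation of an
  evolutionary vector field commutes with total derivatives give
  \<open>D\<^sub>\<alpha> F = \<Phi>\<^sup>-\<^sup>1 (pr X\<^sub>R (D\<^sub>\<alpha> \<Phi>) - (D\<^sub>\<alpha> \<Phi>) \<Phi>\<^sup>-\<^sup>1 pr X\<^sub>R \<Phi>)\<close>. Where the spectral
  problem holds, \<open>D\<^sub>\<alpha> \<Phi> = U\<^sub>\<alpha> \<Phi>\<close>; writing \<open>D\<^sub>\<alpha> \<Phi> = (D\<^sub>\<alpha> \<Phi> - U\<^sub>\<alpha> \<Phi>) + U\<^sub>\<alpha> \<Phi>\<close> and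
  applying the Leibniz rule for \<open>pr X\<^sub>R\<close> to \<open>U\<^sub>\<alpha> \<Phi>\<close>, the terms \<open>\<Phi>\<^sup>-\<^sup>1 U\<^sub>\<alpha> pr X\<^sub>R \<Phi>\<close>
  cancel and the immersion formula remains. \<open>F\<close> lies in the Lie algebra because each
  \<open>\<Phi>\<^sup>-\<^sup>1 \<partial>\<Phi>/\<partial>u\<^sup>i\<^sub>J\<close> is the velocity of a curve in \<open>G\<close> through the identity.

  The commutation of \<open>D\<^sub>\<alpha>\<close> with \<open>pr X\<^sub>R\<close> comes down to the symmetry of mixed partial
  derivatives, once both are written as vector fields in finitely many jet coordinates; the
  remaining analytic work is that smooth functions of finitely many coordinates are closed under
  products and under matrix inversion.\<close>

section \<open>Partial derivatives of functions of finitely many coordinates\<close>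

definition depends_on :: "'c set \<Rightarrow> (('c \<Rightarrow> real) \<Rightarrow> 'a) \<Rightarrow> bool" where
  "depends_on S f \<longleftrightarrow> (\<forall>p q. (\<forall>c\<in>S. p c = q c) \<longrightarrow> f p = f q)"

definition partially_differentiable :: "(('c \<Rightarrow> real) \<Rightarrow> 'a::real_normed_vector) \<Rightarrow> bool" where
  "partially_differentiable f \<longleftrightarrow> (\<forall>c p. (\<lambda>t. f (p(c := t))) differentiable (at (p c)))"

lemma depends_on_mono: "depends_on S f \<Longrightarrow> S \<subseteq> T \<Longrightarrow> depends_on T f"
  unfolding depends_on_def by blast

lemma depends_on_comp: "depends_on S f \<Longrightarrow> depends_on S (\<lambda>p. F (f p))"
  unfolding depends_on_def by metis

lemma depends_on_comp2:
  "depends_on S f \<Longrightarrow> depends_on T g \<Longrightarrow> depends_on (S \<union> T) (\<lambda>p. F (f p) (g p))"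
  unfolding depends_on_def by (metis UnCI)

lemma pdv_has_vector_derivative:
  assumes "partially_differentiable f"
  shows "((\<lambda>t. f (p(c := t))) has_vector_derivative pdv c f p) (at (p c))"
  using assms unfolding partially_differentiable_def pdv_def by (simp add: vector_derivative_works)

lemma pdv_has_vector_derivative_upd:
  assumes "partially_differentiable f"
  shows "((\<lambda>t. f (p(c := t))) has_vector_derivative pdv c f (p(c := s))) (at s)"
  using pdv_has_vector_derivative[OF assms, of "p(c := s)" c] by simp

lemma pdv_eqI:
  assumes "((\<lambda>t. f (p(c := t))) has_vector_derivative D) (at (p c))"
  shows "pdv c f p = D"
  unfolding pdv_def using assms by (rule vector_derivative_at)

lemma partially_differentiableI:
  assumes "\<And>c p. ((\<lambda>t. f (p(c := t))) has_vector_derivative D c p) (at (p c))"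
  shows "partially_differentiable f"
  unfolding partially_differentiable_def using assms by (meson differentiableI_vector)

lemma pdv_eq_0_if_depends_on:
  assumes "depends_on S f" "c \<notin> S"
  shows "pdv c f p = 0"
proof -
  have "f (p(c := t)) = f p" for t
    using assms unfolding depends_on_def by (metis fun_upd_other)
  then show ?thesis unfolding pdv_def by simp
qed

lemma depends_on_pdv:
  assumes "depends_on S f"
  shows "depends_on S (pdv c f)"
  unfolding depends_on_def
proof (intro allI impI)
  fix p q :: "'a \<Rightarrow> real" assume pq: "\<forall>c\<in>S. p c = q c"
  show "pdv c f p = pdv c f q"
  proof (cases "c \<in> S")
    case True
    have "f (p(c := t)) = f (q(c := t))" for t
      using assms pq unfolding depends_on_def by (metis fun_upd_apply)
    then show ?thesis unfolding pdv_def using True pq by simp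
  qed (simp add: pdv_eq_0_if_depends_on[OF assms])
qed

lemma pdv_const: "pdv c (\<lambda>p. k) = (\<lambda>p. 0)"
  by (simp add: pdv_def fun_eq_iff)

lemma partially_differentiable_const: "partially_differentiable (\<lambda>p. k)"
  by (rule partially_differentiableI) (rule has_vector_derivative_const)

lemma pdv_component: "pdv c (\<lambda>p. p d) = (\<lambda>p. if c = d then 1 else 0)"
  by (rule ext, rule pdv_eqI) (cases "c = d"; auto intro!: derivative_eq_intros)

lemma partially_differentiable_component: "partially_differentiable (\<lambda>p. p d)"
  by (rule partially_differentiableI[where D = "\<lambda>c p. if c = d then 1 else 0"])
    (auto intro!: derivative_eq_intros)

lemma pdv_add:
  assumes "partially_differentiable f" "partially_differentiable g"
  shows "pdv c (\<lambda>p. f p + g p) = (\<lambda>p. pdv c f p + pdv c g p)"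
  by (rule ext, rule pdv_eqI) (intro has_vector_derivative_add pdv_has_vector_derivative assms)

lemma partially_differentiable_add:
  assumes "partially_differentiable f" "partially_differentiable g"
  shows "partially_differentiable (\<lambda>p. f p + g p)"
  by (rule partially_differentiableI[where D = "\<lambda>c p. pdv c f p + pdv c g p"])
    (intro has_vector_derivative_add pdv_has_vector_derivative assms)

lemma pdv_minus:
  assumes "partially_differentiable f"
  shows "pdv c (\<lambda>p. - f p) = (\<lambda>p. - pdv c f p)"
  by (rule ext, rule pdv_eqI) (intro has_vector_derivative_minus pdv_has_vector_derivative assms)

lemma partially_differentiable_minus:
  assumes "partially_differentiable f"
  shows "partially_differentiable (\<lambda>p. - f p)"
  by (rule partially_differentiableI[where D = "\<lambda>c p. - pdv c f p"])
    (intro has_vector_derivative_minus pdv_has_vector_derivative assms)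

lemma pdv_bilinear_has_vector_derivative:
  assumes "bounded_bilinear B" "partially_differentiable f" "partially_differentiable g"
  shows "((\<lambda>t. B (f (p(c := t))) (g (p(c := t)))) has_vector_derivative
    B (pdv c f p) (g p) + B (f p) (pdv c g p)) (at (p c))"
  using bounded_bilinear.has_vector_derivative[OF assms(1) pdv_has_vector_derivative[OF assms(2), of p c]
      pdv_has_vector_derivative[OF assms(3), of p c]]
  by (simp add: add.commute)

lemma pdv_bilinear:
  "bounded_bilinear B \<Longrightarrow> partially_differentiable f \<Longrightarrow> partially_differentiable g \<Longrightarrow>
    pdv c (\<lambda>p. B (f p) (g p)) = (\<lambda>p. B (pdv c f p) (g p) + B (f p) (pdv c g p))"
  by (rule ext, rule pdv_eqI) (rule pdv_bilinear_has_vector_derivative)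

lemma partially_differentiable_bilinear:
  "bounded_bilinear B \<Longrightarrow> partially_differentiable f \<Longrightarrow> partially_differentiable g \<Longrightarrow>
    partially_differentiable (\<lambda>p. B (f p) (g p))"
  by (rule partially_differentiableI) (rule pdv_bilinear_has_vector_derivative)

lemma partially_differentiable_sum:
  "finite I \<Longrightarrow> (\<And>i. i \<in> I \<Longrightarrow> partially_differentiable (f i)) \<Longrightarrow>
    partially_differentiable (\<lambda>p. \<Sum>i\<in>I. f i p)"
  by (induction I rule: finite_induct) (simp_all add: partially_differentiable_const partially_differentiable_add)

lemma pdv_sum:
  "finite I \<Longrightarrow> (\<And>i. i \<in> I \<Longrightarrow> partially_differentiable (f i)) \<Longrightarrow>
    pdv c (\<lambda>p. \<Sum>i\<in>I. f i p) = (\<lambda>p. \<Sum>i\<in>I. pdv c (f i) p)"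
  by (induction I rule: finite_induct)
    (simp_all add: pdv_const pdv_add partially_differentiable_sum)

section \<open>Closure properties of smooth functions\<close>

lemma smooth_fs_depends_on: "smooth_fs UNIV f \<Longrightarrow> \<exists>S. finite S \<and> depends_on S f"
  unfolding depends_on_def by (erule smooth_fs.cases) blast

lemma smooth_fs_continuous_on: "smooth_fs UNIV f \<Longrightarrow> continuous_on UNIV f"
  by (erule smooth_fs.cases) simp

lemma smooth_fs_partially_differentiable: "smooth_fs UNIV f \<Longrightarrow> partially_differentiable f"
  by (erule smooth_fs.cases) (simp add: partially_differentiable_def)

lemma smooth_fs_pdv: "smooth_fs UNIV f \<Longrightarrow> smooth_fs UNIV (pdv c f)"
  by (erule smooth_fs.cases) simp

lemma smooth_fs_common_depends_on:
  assumes "smooth_fs UNIV f" "smooth_fs UNIV g"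
  obtains S where "finite S" "depends_on S f" "depends_on S g"
proof -
  obtain S T where S: "finite S" "depends_on S f" and T: "finite T" "depends_on T g"
    using smooth_fs_depends_on[OF assms(1)] smooth_fs_depends_on[OF assms(2)] by blast
  show ?thesis
    using S T by (intro that[of "S \<union> T"] depends_on_mono[OF S(2)] depends_on_mono[OF T(2)]) auto
qed

definition regular_fs :: "(('c \<Rightarrow> real) \<Rightarrow> 'a::real_normed_vector) \<Rightarrow> bool" where
  "regular_fs f \<longleftrightarrow> (\<exists>S. finite S \<and> depends_on S f) \<and> continuous_on UNIV f \<and> partially_differentiable f"

lemma regular_fs_if_smooth_fs: "smooth_fs UNIV f \<Longrightarrow> regular_fs f"
  unfolding regular_fs_def
  using smooth_fs_depends_on smooth_fs_continuous_on smooth_fs_partially_differentiable by blast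

lemma regular_fs_add:
  assumes "regular_fs f" "regular_fs g"
  shows "regular_fs (\<lambda>p. f p + g p)"
proof -
  obtain S T where "finite S" "depends_on S f" "finite T" "depends_on T g"
    using assms unfolding regular_fs_def by blast
  then have "finite (S \<union> T)" "depends_on (S \<union> T) (\<lambda>p. f p + g p)"
    by (simp_all add: depends_on_comp2)
  then show ?thesis
    using assms unfolding regular_fs_def by (blast intro: continuous_on_add partially_differentiable_add)
qed

lemma regular_fs_bilinear:
  assumes B: "bounded_bilinear B" and "regular_fs f" "regular_fs g"
  shows "regular_fs (\<lambda>p. B (f p) (g p))"
proof -
  obtain S T where "finite S" "depends_on S f" "finite T" "depends_on T g"
    using assms unfolding regular_fs_def by blast
  then have "finite (S \<union> T)" "depends_on (S \<union> T) (\<lambda>p. B (f p) (g p))"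
    by (simp_all add: depends_on_comp2)
  then show ?thesis
    using assms unfolding regular_fs_def
    by (blast intro: bounded_bilinear.continuous_on[OF B] partially_differentiable_bilinear[OF B])
qed

lemma regular_fs_minus: "regular_fs f \<Longrightarrow> regular_fs (\<lambda>p. - f p)"
  unfolding regular_fs_def
  by (blast intro: depends_on_comp continuous_on_minus partially_differentiable_minus)

lemma smooth_fs_coinduct_closed:
  assumes "Q f" and step: "\<And>f. Q f \<Longrightarrow> regular_fs f \<and> (\<forall>c. Q (pdv c f))"
  shows "smooth_fs UNIV f"
  using assms(1)
proof (coinduction arbitrary: f rule: smooth_fs.coinduct)
  case (smooth_fs f)
  from step[OF this] obtain S where "finite S" "depends_on S f" and cont: "continuous_on UNIV f"
    and pd: "partially_differentiable f" and Q: "\<forall>c. Q (pdv c f)"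
    unfolding regular_fs_def by blast
  then have "\<exists>S. finite S \<and> (\<forall>p\<in>UNIV. \<forall>q\<in>UNIV. (\<forall>c\<in>S. p c = q c) \<longrightarrow> f p = f q)"
    unfolding depends_on_def by blast
  moreover have "\<forall>c. \<forall>p\<in>UNIV. (\<lambda>t. f (p(c := t))) differentiable at (p c)"
    using pd unfolding partially_differentiable_def by blast
  moreover have "\<forall>c. (\<exists>f'. pdv c f = f' \<and> Q f') \<or> smooth_fs UNIV (pdv c f)"
    using Q by blast
  ultimately show ?case using cont by blast
qed

lemma smooth_fs_const: "smooth_fs UNIV (\<lambda>p. k)"
proof (rule smooth_fs_coinduct_closed[where Q = "\<lambda>h. \<exists>k. h = (\<lambda>p. k)"])
  fix f :: "('a \<Rightarrow> real) \<Rightarrow> 'b" assume "\<exists>k. f = (\<lambda>p. k)"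
  then obtain k where f: "f = (\<lambda>p. k)" by blast
  have "depends_on {} f" by (simp add: f depends_on_def)
  moreover have "pdv c f = (\<lambda>p. 0)" for c by (simp add: f pdv_const)
  ultimately show "regular_fs f \<and> (\<forall>c. \<exists>k. pdv c f = (\<lambda>p. k))"
    by (auto simp: regular_fs_def f partially_differentiable_const)
qed blast

lemma smooth_fs_component: "smooth_fs UNIV (\<lambda>p. p d)"
proof (rule smooth_fs_coinduct_closed[where Q = "\<lambda>h. h = (\<lambda>p. p d) \<or> smooth_fs UNIV h"])
  fix f :: "('a \<Rightarrow> real) \<Rightarrow> real" assume "f = (\<lambda>p. p d) \<or> smooth_fs UNIV f"
  then show "regular_fs f \<and> (\<forall>c. pdv c f = (\<lambda>p. p d) \<or> smooth_fs UNIV (pdv c f))"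
  proof
    assume f: "f = (\<lambda>p. p d)"
    have "depends_on {d} f" by (simp add: f depends_on_def)
    moreover have "continuous_on UNIV f"
      unfolding f by (rule continuous_on_product_coordinates)
    moreover have "smooth_fs UNIV (pdv c f)" for c
      by (simp add: f pdv_component smooth_fs_const)
    ultimately show ?thesis
      using partially_differentiable_component[of d] unfolding regular_fs_def f by blast
  qed (blast intro: regular_fs_if_smooth_fs smooth_fs_pdv)
qed simp

inductive bilinear_closure ::
  "('a::real_normed_vector \<Rightarrow> 'b::real_normed_vector \<Rightarrow> 'd::real_normed_vector) \<Rightarrow>
   (('c \<Rightarrow> real) \<Rightarrow> 'd) \<Rightarrow> bool"
  for B where
  smooth: "smooth_fs UNIV h \<Longrightarrow> bilinear_closure B h"
| add: "bilinear_closure B f \<Longrightarrow> bilinear_closure B g \<Longrightarrow> bilinear_closure B (\<lambda>p. f p + g p)"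
| bilinear: "smooth_fs UNIV f \<Longrightarrow> smooth_fs UNIV g \<Longrightarrow> bilinear_closure B (\<lambda>p. B (f p) (g p))"

lemma bilinear_closure_step:
  assumes B: "bounded_bilinear B" and "bilinear_closure B h"
  shows "regular_fs h \<and> (\<forall>c. bilinear_closure B (pdv c h))"
  using assms(2)
proof (induction rule: bilinear_closure.induct)
  case (smooth h)
  then show ?case by (blast intro: regular_fs_if_smooth_fs bilinear_closure.smooth smooth_fs_pdv)
next
  case (add f g)
  then have "partially_differentiable f" "partially_differentiable g"
    by (simp_all add: regular_fs_def)
  then show ?case
    using add.IH by (simp add: pdv_add regular_fs_add bilinear_closure.add)
next
  case (bilinear f g)
  then have pd: "partially_differentiable f" "partially_differentiable g"
    by (simp_all add: smooth_fs_partially_differentiable)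
  have "bilinear_closure B (pdv c (\<lambda>p. B (f p) (g p)))" for c
    unfolding pdv_bilinear[OF B pd]
    by (rule bilinear_closure.add; rule bilinear_closure.bilinear) (simp_all add: bilinear smooth_fs_pdv)
  then show ?case
    using bilinear by (blast intro: regular_fs_bilinear[OF B] regular_fs_if_smooth_fs)
qed

lemma smooth_fs_bilinear_closure:
  assumes "bounded_bilinear B" "bilinear_closure B h"
  shows "smooth_fs UNIV h"
  using assms(2) by (rule smooth_fs_coinduct_closed[where Q = "bilinear_closure B"])
    (rule bilinear_closure_step[OF assms(1)])

lemma smooth_fs_bilinear:
  "bounded_bilinear B \<Longrightarrow> smooth_fs UNIV f \<Longrightarrow> smooth_fs UNIV g \<Longrightarrow>
    smooth_fs UNIV (\<lambda>p. B (f p) (g p))"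
  by (metis smooth_fs_bilinear_closure bilinear_closure.bilinear)

text \<open>Any bounded bilinear map serves to form the closure under sums.\<close>
lemma smooth_fs_add:
  "smooth_fs UNIV f \<Longrightarrow> smooth_fs UNIV g \<Longrightarrow> smooth_fs UNIV (\<lambda>p. f p + g p)"
  by (rule smooth_fs_bilinear_closure[OF bounded_bilinear_scaleR])
    (intro bilinear_closure.add bilinear_closure.smooth)

lemma smooth_fs_scaleR:
  "smooth_fs UNIV r \<Longrightarrow> smooth_fs UNIV f \<Longrightarrow> smooth_fs UNIV (\<lambda>p. r p *\<^sub>R f p)"
  by (rule smooth_fs_bilinear[OF bounded_bilinear_scaleR])

lemma smooth_fs_diff:
  assumes "smooth_fs UNIV f" "smooth_fs UNIV g"
  shows "smooth_fs UNIV (\<lambda>p. f p - g p)"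
  using smooth_fs_add[OF assms(1) smooth_fs_scaleR[OF smooth_fs_const[of "-1"] assms(2)]] by simp

lemma smooth_fs_sum:
  "finite I \<Longrightarrow> (\<And>i. i \<in> I \<Longrightarrow> smooth_fs UNIV (f i)) \<Longrightarrow> smooth_fs UNIV (\<lambda>p. \<Sum>i\<in>I. f i p)"
  by (induction I rule: finite_induct) (simp_all add: smooth_fs_const smooth_fs_add)

lemma matrix_add_rdistrib: "(B + C) ** A = B ** A + C ** A"
  by (vector matrix_matrix_mult_def sum.distrib[symmetric] field_simps)

lemma bounded_bilinear_matrix_mult:
  "bounded_bilinear ((**) :: complex^'n::finite^'m::finite \<Rightarrow> complex^'p::finite^'n \<Rightarrow> complex^'p^'m)"
proof -
  have scaleR_component: "(r *\<^sub>R A) $ i $ j = of_real r * A $ i $ j" for r and A :: "complex^'q^'o"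
    by (simp only: vector_scaleR_component) (simp add: scaleR_conv_of_real)
  have "linear (\<lambda>B. A ** B)" for A :: "complex^'n^'m"
    by (rule linearI) (simp_all add: matrix_add_ldistrib, simp add: matrix_matrix_mult_def vec_eq_iff
        scaleR_component sum_distrib_left scaleR_sum_right mult.left_commute)
  moreover have "linear (\<lambda>A. A ** B)" for B :: "complex^'p^'n"
    by (rule linearI) (simp_all add: matrix_add_rdistrib, simp add: matrix_matrix_mult_def vec_eq_iff
        scaleR_component sum_distrib_left scaleR_sum_right mult.assoc)
  ultimately show ?thesis
    using bilinear_conv_bounded_bilinear unfolding bilinear_def by blast
qed

interpretation matrix_mult: bounded_bilinear
  "(**) :: complex^'n::finite^'m::finite \<Rightarrow> complex^'p::finite^'n \<Rightarrow> complex^'p^'m"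
  by (rule bounded_bilinear_matrix_mult)

lemma matrix_inv_right: "invertible A \<Longrightarrow> A ** matrix_inv A = mat 1"
  unfolding invertible_def matrix_inv_def by (rule someI2_ex) auto

lemma matrix_inv_left: "invertible A \<Longrightarrow> matrix_inv A ** A = mat 1"
  unfolding invertible_def matrix_inv_def by (rule someI2_ex) auto

lemma matrix_inv_component_cramer:
  fixes A :: "complex^'n::finite^'n"
  assumes "invertible A"
  shows "matrix_inv A $ k $ j = det (\<chi> i l. if l = k then (if i = j then 1 else 0) else A $ i $ l) / det A"
proof -
  let ?x = "\<chi> k. matrix_inv A $ k $ j"
  let ?b = "\<chi> i. if i = j then 1 else (0::complex)"
  have "A *v ?x = ?b"
    using matrix_inv_right[OF assms]
    by (simp add: vec_eq_iff matrix_vector_mult_def matrix_matrix_mult_def mat_def)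
  moreover have "det A \<noteq> 0" using assms invertible_det_nz by blast
  ultimately have "?x = (\<chi> k. det (\<chi> i l. if l = k then ?b $ i else A $ i $ l) / det A)"
    using cramer by blast
  then have "?x $ k = det (\<chi> i l. if l = k then ?b $ i else A $ i $ l) / det A"
    by simp
  moreover have "(\<chi> i l. if l = k then ?b $ i else A $ i $ l) =
      (\<chi> i l. if l = k then (if i = j then 1 else 0) else A $ i $ l)"
    by (simp add: vec_eq_iff)
  ultimately show ?thesis by simp
qed

lemma continuous_on_det:
  fixes F :: "'a::topological_space \<Rightarrow> complex^'n::finite^'n"
  shows "continuous_on S F \<Longrightarrow> continuous_on S (\<lambda>x. det (F x))"
  unfolding det_def by (intro continuous_intros)

lemma continuous_on_matrix_inv:
  fixes F :: "'a::topological_space \<Rightarrow> complex^'n::finite^'n"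
  assumes "continuous_on S F" and "\<And>x. x \<in> S \<Longrightarrow> invertible (F x)"
  shows "continuous_on S (\<lambda>x. matrix_inv (F x))"
proof (rule continuous_on_eq)
  have entry: "continuous_on S (\<lambda>x. if l = k then (if i = j then 1 else 0) else F x $ i $ l)"
    for i j k l :: 'n
    using assms(1) by (cases "l = k") (simp_all add: continuous_on_component)
  show "continuous_on S (\<lambda>x. \<chi> k j. det (\<chi> i l. if l = k then (if i = j then 1 else 0) else F x $ i $ l) / det (F x))"
    using assms invertible_det_nz
    by (intro continuous_on_vec_lambda continuous_on_divide continuous_on_det entry) auto
  show "(\<chi> k j. det (\<chi> i l. if l = k then (if i = j then 1 else 0) else F x $ i $ l) / det (F x)) = matrix_inv (F x)"
    if "x \<in> S" for x
    using matrix_inv_component_cramer[OF assms(2)[OF that]] by (simp add: vec_eq_iff)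
qed

lemma has_vector_derivative_iff_difference_quotient:
  fixes f :: "real \<Rightarrow> 'a::real_normed_vector"
  shows "(f has_vector_derivative D) (at x) \<longleftrightarrow> ((\<lambda>t. (f t - f x) /\<^sub>R (t - x)) \<longlongrightarrow> D) (at x)"
proof -
  have eq: "norm ((1 / norm (y - x)) *\<^sub>R (f y - (f x + (y - x) *\<^sub>R D))) =
      norm ((f y - f x) /\<^sub>R (y - x) - D)" if "y \<noteq> x" for y
  proof -
    have "(1 / (y - x)) *\<^sub>R (f y - (f x + (y - x) *\<^sub>R D)) =
        (f y - f x) /\<^sub>R (y - x) - (1 / (y - x)) *\<^sub>R ((y - x) *\<^sub>R D)"
      by (simp add: algebra_simps inverse_eq_divide)
    also have "(1 / (y - x)) *\<^sub>R ((y - x) *\<^sub>R D) = D" using that by simp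
    finally have "(f y - f x) /\<^sub>R (y - x) - D = (1 / (y - x)) *\<^sub>R (f y - (f x + (y - x) *\<^sub>R D))"
      by simp
    then show ?thesis by simp
  qed
  have ev: "\<forall>\<^sub>F y in at x. norm ((1 / norm (y - x)) *\<^sub>R (f y - (f x + (y - x) *\<^sub>R D))) =
      norm ((f y - f x) /\<^sub>R (y - x) - D)"
    unfolding eventually_at_filter using eq by (intro always_eventually) auto
  have "(f has_vector_derivative D) (at x) \<longleftrightarrow>
        ((\<lambda>y. (1 / norm (y - x)) *\<^sub>R (f y - (f x + (y - x) *\<^sub>R D))) \<longlongrightarrow> 0) (at x)"
    unfolding has_vector_derivative_def has_derivative_at2 by (simp add: bounded_linear_scaleR_left)
  also have "\<dots> \<longleftrightarrow> ((\<lambda>y. norm ((1 / norm (y - x)) *\<^sub>R (f y - (f x + (y - x) *\<^sub>R D)))) \<longlongrightarrow> 0) (at x)"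
    by (rule tendsto_norm_zero_iff[symmetric])
  also have "\<dots> \<longleftrightarrow> ((\<lambda>y. norm ((f y - f x) /\<^sub>R (y - x) - D)) \<longlongrightarrow> 0) (at x)"
    by (rule tendsto_cong[OF ev])
  also have "\<dots> \<longleftrightarrow> ((\<lambda>t. (f t - f x) /\<^sub>R (t - x)) \<longlongrightarrow> D) (at x)"
    by (simp add: tendsto_norm_zero_iff LIM_zero_iff)
  finally show ?thesis .
qed

lemma has_vector_derivative_matrix_inv:
  fixes \<phi> :: "real \<Rightarrow> complex^'n::finite^'n"
  assumes D: "(\<phi> has_vector_derivative D) (at x)"
    and inv: "\<And>t. invertible (\<phi> t)"
    and cont: "continuous (at x) (\<lambda>t. matrix_inv (\<phi> t))"
  shows "((\<lambda>t. matrix_inv (\<phi> t)) has_vector_derivative - (matrix_inv (\<phi> x) ** D ** matrix_inv (\<phi> x))) (at x)"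
proof -
  let ?\<psi> = "\<lambda>t. matrix_inv (\<phi> t)"
  have "?\<psi> t - ?\<psi> x = - (?\<psi> t ** (\<phi> t - \<phi> x) ** ?\<psi> x)" for t
    using matrix_inv_left[OF inv[of t]] matrix_inv_right[OF inv[of x]]
    by (simp add: matrix_mult.diff_left matrix_mult.diff_right matrix_mul_assoc[symmetric])
  then have quotient: "(?\<psi> t - ?\<psi> x) /\<^sub>R (t - x) = - (?\<psi> t ** ((\<phi> t - \<phi> x) /\<^sub>R (t - x)) ** ?\<psi> x)" for t
    by (simp add: matrix_mult.scaleR_left matrix_mult.scaleR_right)
  have "(?\<psi> \<longlongrightarrow> ?\<psi> x) (at x)"
    using cont by (simp add: continuous_at)
  moreover have "((\<lambda>t. (\<phi> t - \<phi> x) /\<^sub>R (t - x)) \<longlongrightarrow> D) (at x)"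
    using D has_vector_derivative_iff_difference_quotient by blast
  ultimately have "((\<lambda>t. - (?\<psi> t ** ((\<phi> t - \<phi> x) /\<^sub>R (t - x)) ** ?\<psi> x)) \<longlongrightarrow> - (?\<psi> x ** D ** ?\<psi> x)) (at x)"
    by (intro tendsto_minus matrix_mult.tendsto tendsto_const)
  then show ?thesis
    unfolding has_vector_derivative_iff_difference_quotient quotient .
qed

lemma smooth_fs_matrix_mult:
  fixes f :: "('c \<Rightarrow> real) \<Rightarrow> complex^'n::finite^'m::finite" and g :: "('c \<Rightarrow> real) \<Rightarrow> complex^'p::finite^'n"
  shows "smooth_fs UNIV f \<Longrightarrow> smooth_fs UNIV g \<Longrightarrow> smooth_fs UNIV (\<lambda>p. f p ** g p)"
  by (rule smooth_fs_bilinear[OF bounded_bilinear_matrix_mult])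

lemma pdv_matrix_inv_has_vector_derivative:
  fixes \<Phi> :: "('c \<Rightarrow> real) \<Rightarrow> complex^'n::finite^'n"
  assumes "partially_differentiable \<Phi>" "continuous_on UNIV \<Phi>" "\<And>p. invertible (\<Phi> p)"
  shows "((\<lambda>t. matrix_inv (\<Phi> (p(c := t)))) has_vector_derivative
           - (matrix_inv (\<Phi> p) ** pdv c \<Phi> p ** matrix_inv (\<Phi> p))) (at (p c))"
proof -
  have "continuous_on UNIV (\<lambda>t. p(c := t))"
  proof (rule continuous_on_coordinatewise_then_product)
    show "continuous_on UNIV (\<lambda>t. (p(c := t)) i)" for i
      by (cases "i = c") simp_all
  qed
  then have "continuous_on UNIV (\<lambda>t. matrix_inv (\<Phi> (p(c := t))))"
    by (rule continuous_on_compose2[OF continuous_on_matrix_inv[OF assms(2,3)]]) simp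
  then have "continuous (at (p c)) (\<lambda>t. matrix_inv (\<Phi> (p(c := t))))"
    by (simp add: continuous_on_eq_continuous_at)
  then show ?thesis
    using has_vector_derivative_matrix_inv[OF pdv_has_vector_derivative[OF assms(1), of p c] assms(3)]
    by simp
qed

lemma partially_differentiable_matrix_inv:
  fixes \<Phi> :: "('c \<Rightarrow> real) \<Rightarrow> complex^'n::finite^'n"
  assumes "partially_differentiable \<Phi>" "continuous_on UNIV \<Phi>" "\<And>p. invertible (\<Phi> p)"
  shows "partially_differentiable (\<lambda>p. matrix_inv (\<Phi> p))"
  by (rule partially_differentiableI) (rule pdv_matrix_inv_has_vector_derivative[OF assms])

lemma pdv_matrix_inv:
  fixes \<Phi> :: "('c \<Rightarrow> real) \<Rightarrow> complex^'n::finite^'n"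
  assumes "partially_differentiable \<Phi>" "continuous_on UNIV \<Phi>" "\<And>p. invertible (\<Phi> p)"
  shows "pdv c (\<lambda>p. matrix_inv (\<Phi> p)) = (\<lambda>p. - (matrix_inv (\<Phi> p) ** pdv c \<Phi> p ** matrix_inv (\<Phi> p)))"
  by (rule ext, rule pdv_eqI) (rule pdv_matrix_inv_has_vector_derivative[OF assms])

text \<open>Stable under partial derivatives by the formula for the derivative of the inverse.\<close>
inductive inverse_closure ::
  "(('c \<Rightarrow> real) \<Rightarrow> complex^'n::finite^'n) \<Rightarrow> (('c \<Rightarrow> real) \<Rightarrow> complex^'n^'n) \<Rightarrow> bool"
  for \<Phi> where
  smooth: "smooth_fs UNIV f \<Longrightarrow> inverse_closure \<Phi> f"
| inverse: "inverse_closure \<Phi> (\<lambda>p. matrix_inv (\<Phi> p))"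
| add: "inverse_closure \<Phi> f \<Longrightarrow> inverse_closure \<Phi> g \<Longrightarrow> inverse_closure \<Phi> (\<lambda>p. f p + g p)"
| mult: "inverse_closure \<Phi> f \<Longrightarrow> inverse_closure \<Phi> g \<Longrightarrow> inverse_closure \<Phi> (\<lambda>p. f p ** g p)"
| minus: "inverse_closure \<Phi> f \<Longrightarrow> inverse_closure \<Phi> (\<lambda>p. - f p)"

lemma inverse_closure_step:
  fixes \<Phi> :: "('c \<Rightarrow> real) \<Rightarrow> complex^'n::finite^'n"
  assumes \<Phi>: "smooth_fs UNIV \<Phi>" and inv: "\<And>p. invertible (\<Phi> p)" and "inverse_closure \<Phi> h"
  shows "regular_fs h \<and> (\<forall>c. inverse_closure \<Phi> (pdv c h))"
  using assms(3)
proof (induction rule: inverse_closure.induct)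
  case (smooth f)
  then show ?case by (blast intro: regular_fs_if_smooth_fs inverse_closure.smooth smooth_fs_pdv)
next
  case inverse
  note \<Phi>' = smooth_fs_partially_differentiable[OF \<Phi>] smooth_fs_continuous_on[OF \<Phi>] inv
  have "regular_fs (\<lambda>p. matrix_inv (\<Phi> p))"
    using smooth_fs_depends_on[OF \<Phi>] continuous_on_matrix_inv[OF \<Phi>'(2) inv]
      partially_differentiable_matrix_inv[OF \<Phi>']
    unfolding regular_fs_def by (blast intro: depends_on_comp)
  moreover have "inverse_closure \<Phi> (pdv c (\<lambda>p. matrix_inv (\<Phi> p)))" for c
    unfolding pdv_matrix_inv[OF \<Phi>']
    by (intro inverse_closure.minus inverse_closure.mult inverse_closure.inverse inverse_closure.smooth
        smooth_fs_pdv \<Phi>)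
  ultimately show ?case by blast
next
  case (add f g)
  then have "partially_differentiable f" "partially_differentiable g"
    by (simp_all add: regular_fs_def)
  then show ?case
    using add.IH by (simp add: pdv_add regular_fs_add inverse_closure.add)
next
  case (mult f g)
  then have pd: "partially_differentiable f" "partially_differentiable g"
    by (simp_all add: regular_fs_def)
  have "inverse_closure \<Phi> (pdv c (\<lambda>p. f p ** g p))" for c
    unfolding pdv_bilinear[OF bounded_bilinear_matrix_mult pd]
    by (rule inverse_closure.add; rule inverse_closure.mult) (use mult in blast)+
  then show ?case
    using mult.IH by (blast intro: regular_fs_bilinear[OF bounded_bilinear_matrix_mult])
next
  case (minus f)
  then have "partially_differentiable f"
    by (simp add: regular_fs_def)
  then show ?case
    using minus.IH by (simp add: pdv_minus regular_fs_minus inverse_closure.minus)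
qed

lemma smooth_fs_matrix_inv:
  fixes \<Phi> :: "('c \<Rightarrow> real) \<Rightarrow> complex^'n::finite^'n"
  assumes "smooth_fs UNIV \<Phi>" "\<And>p. invertible (\<Phi> p)"
  shows "smooth_fs UNIV (\<lambda>p. matrix_inv (\<Phi> p))"
  using inverse_closure.inverse
  by (rule smooth_fs_coinduct_closed[where Q = "inverse_closure \<Phi>"]) (rule inverse_closure_step[OF assms])

section \<open>Symmetry of mixed partial derivatives\<close>

lemma linearization_bound:
  fixes g :: "real \<Rightarrow> 'a::real_normed_vector"
  assumes g': "\<And>x. (g has_vector_derivative g' x) (at x)"
    and bound: "\<And>x. x \<in> closed_segment a (a + h) \<Longrightarrow> norm (g' x - D) \<le> B"
  shows "norm (g (a + h) - g a - h *\<^sub>R D) \<le> 3 * \<bar>h\<bar> * B"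
proof -
  have "norm (g (a + h) - g a - ((a + h) - a) *\<^sub>R g' a) \<le> norm ((a + h) - a) * (2 * B)"
  proof (rule vector_differentiable_bound_linearization)
    show "norm (g' x - g' a) \<le> 2 * B" if "x \<in> closed_segment a (a + h)" for x
      using norm_diff_triangle_le[OF bound[OF that], of "g' a" B] bound[of a]
      by (simp add: norm_minus_commute)
  qed (auto intro: has_vector_derivative_at_within[OF g'])
  then have "norm (g (a + h) - g a - h *\<^sub>R g' a) \<le> \<bar>h\<bar> * (2 * B)"
    by simp
  moreover have "norm (h *\<^sub>R g' a - h *\<^sub>R D) \<le> \<bar>h\<bar> * B"
    using bound[of a] by (simp add: scaleR_diff_right[symmetric] mult_left_mono)
  ultimately have "norm (g (a + h) - g a - h *\<^sub>R D) \<le> \<bar>h\<bar> * (2 * B) + \<bar>h\<bar> * B"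
    by (rule norm_diff_triangle_le)
  then show ?thesis by (simp add: algebra_simps)
qed

lemma closed_segment_dist_le:
  fixes a x :: real
  shows "x \<in> closed_segment a (a + h) \<Longrightarrow> \<bar>x - a\<bar> \<le> \<bar>h\<bar>"
  by (auto simp: closed_segment_eq_real_ivl split: if_splits)

text \<open>Mean value estimates, first in the second and then in the first variable.\<close>
lemma second_difference_approx:
  fixes g :: "real \<Rightarrow> real \<Rightarrow> 'a::real_normed_vector"
  assumes gx: "\<And>\<sigma> \<tau>. ((\<lambda>\<sigma>'. g \<sigma>' \<tau>) has_vector_derivative gx \<sigma> \<tau>) (at \<sigma>)"
    and gxy: "\<And>\<sigma> \<tau>. ((\<lambda>\<tau>'. gx \<sigma> \<tau>') has_vector_derivative gxy \<sigma> \<tau>) (at \<tau>)"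
    and cont: "isCont (\<lambda>z. gxy (fst z) (snd z)) (s, t)"
    and "\<epsilon> > 0"
  obtains \<delta> where "\<delta> > 0" and "\<And>h k. \<bar>h\<bar> < \<delta> \<Longrightarrow> \<bar>k\<bar> < \<delta> \<Longrightarrow>
      norm (g (s + h) (t + k) - g (s + h) t - g s (t + k) + g s t - (h * k) *\<^sub>R gxy s t)
        \<le> \<epsilon> * \<bar>h\<bar> * \<bar>k\<bar>"
proof -
  define e where "e = \<epsilon> / 9"
  have "e > 0" using \<open>\<epsilon> > 0\<close> by (simp add: e_def)
  then obtain \<delta>' where "\<delta>' > 0" and \<delta>': "\<And>z. dist z (s, t) < \<delta>' \<Longrightarrow> dist (gxy (fst z) (snd z)) (gxy s t) < e"
    using cont unfolding continuous_at_eps_delta by fastforce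
  define \<delta> where "\<delta> = \<delta>' / 2"
  have "\<delta> > 0" using \<open>\<delta>' > 0\<close> by (simp add: \<delta>_def)
  have close: "norm (gxy \<sigma> \<tau> - gxy s t) \<le> e" if "\<bar>\<sigma> - s\<bar> \<le> \<bar>h\<bar>" "\<bar>\<tau> - t\<bar> \<le> \<bar>k\<bar>"
    "\<bar>h\<bar> < \<delta>" "\<bar>k\<bar> < \<delta>" for \<sigma> \<tau> h k
  proof -
    have "dist (\<sigma>, \<tau>) (s, t) \<le> \<bar>\<sigma> - s\<bar> + \<bar>\<tau> - t\<bar>"
      using sqrt_sum_squares_le_sum_abs[of "\<sigma> - s" "\<tau> - t"]
      by (simp add: dist_Pair_Pair dist_real_def)
    also have "\<dots> < \<delta>'" using that by (simp add: \<delta>_def)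
    finally show ?thesis using \<delta>'[of "(\<sigma>, \<tau>)"] by (simp add: dist_norm)
  qed
  have inner: "norm (gx \<sigma> (t + k) - gx \<sigma> t - k *\<^sub>R gxy s t) \<le> 3 * \<bar>k\<bar> * e"
    if "\<bar>\<sigma> - s\<bar> \<le> \<bar>h\<bar>" "\<bar>h\<bar> < \<delta>" "\<bar>k\<bar> < \<delta>" for \<sigma> h k
    using that by (intro linearization_bound[OF gxy] close[of \<sigma> h _ k]) (auto dest: closed_segment_dist_le)
  show ?thesis
  proof (rule that[OF \<open>\<delta> > 0\<close>])
    fix h k assume h: "\<bar>h\<bar> < \<delta>" and k: "\<bar>k\<bar> < \<delta>"
    have "norm ((g (s + h) (t + k) - g (s + h) t) - (g s (t + k) - g s t) - h *\<^sub>R (k *\<^sub>R gxy s t))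
        \<le> 3 * \<bar>h\<bar> * (3 * \<bar>k\<bar> * e)"
    proof (rule linearization_bound[where g = "\<lambda>\<sigma>. g \<sigma> (t + k) - g \<sigma> t"])
      show "((\<lambda>\<sigma>. g \<sigma> (t + k) - g \<sigma> t) has_vector_derivative gx x (t + k) - gx x t) (at x)" for x
        by (intro has_vector_derivative_diff gx)
      show "norm (gx x (t + k) - gx x t - k *\<^sub>R gxy s t) \<le> 3 * \<bar>k\<bar> * e"
        if "x \<in> closed_segment s (s + h)" for x
        using inner h k closed_segment_dist_le[OF that] by blast
    qed
    then show "norm (g (s + h) (t + k) - g (s + h) t - g s (t + k) + g s t - (h * k) *\<^sub>R gxy s t)
        \<le> \<epsilon> * \<bar>h\<bar> * \<bar>k\<bar>"
      by (simp add: e_def algebra_simps)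
  qed
qed

lemma mixed_partials_commute:
  fixes g :: "real \<Rightarrow> real \<Rightarrow> 'a::real_normed_vector"
  assumes gx: "\<And>\<sigma> \<tau>. ((\<lambda>\<sigma>'. g \<sigma>' \<tau>) has_vector_derivative gx \<sigma> \<tau>) (at \<sigma>)"
    and gxy: "\<And>\<sigma> \<tau>. ((\<lambda>\<tau>'. gx \<sigma> \<tau>') has_vector_derivative gxy \<sigma> \<tau>) (at \<tau>)"
    and gy: "\<And>\<sigma> \<tau>. ((\<lambda>\<tau>'. g \<sigma> \<tau>') has_vector_derivative gy \<sigma> \<tau>) (at \<tau>)"
    and gyx: "\<And>\<sigma> \<tau>. ((\<lambda>\<sigma>'. gy \<sigma>' \<tau>) has_vector_derivative gyx \<sigma> \<tau>) (at \<sigma>)"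
    and cont_xy: "isCont (\<lambda>z. gxy (fst z) (snd z)) (s, t)"
    and cont_yx: "isCont (\<lambda>z. gyx (fst z) (snd z)) (s, t)"
  shows "gxy s t = gyx s t"
proof -
  have bound: "norm (gxy s t - gyx s t) \<le> 2 * \<epsilon>" if "\<epsilon> > 0" for \<epsilon>
  proof -
    have cont_yx': "isCont (\<lambda>z. gyx (snd z) (fst z)) (t, s)"
      using isCont_o2[OF isCont_swap[of "(t, s)"], of "\<lambda>z. gyx (fst z) (snd z)"] cont_yx by simp
    obtain \<delta>1 where "\<delta>1 > 0" and approx_xy: "\<And>h k. \<bar>h\<bar> < \<delta>1 \<Longrightarrow> \<bar>k\<bar> < \<delta>1 \<Longrightarrow>
        norm (g (s + h) (t + k) - g (s + h) t - g s (t + k) + g s t - (h * k) *\<^sub>R gxy s t)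
          \<le> \<epsilon> * \<bar>h\<bar> * \<bar>k\<bar>"
      using second_difference_approx[OF gx gxy cont_xy \<open>\<epsilon> > 0\<close>] by blast
    obtain \<delta>2 where "\<delta>2 > 0" and approx_yx: "\<And>h k. \<bar>h\<bar> < \<delta>2 \<Longrightarrow> \<bar>k\<bar> < \<delta>2 \<Longrightarrow>
        norm (g (s + k) (t + h) - g s (t + h) - g (s + k) t + g s t - (h * k) *\<^sub>R gyx s t)
          \<le> \<epsilon> * \<bar>h\<bar> * \<bar>k\<bar>"
      using second_difference_approx[where g = "\<lambda>\<tau> \<sigma>. g \<sigma> \<tau>" and gxy = "\<lambda>\<tau> \<sigma>. gyx \<sigma> \<tau>",
          OF gy gyx cont_yx' \<open>\<epsilon> > 0\<close>] by blast
    define h where "h = min \<delta>1 \<delta>2 / 2"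
    have h: "h > 0" "h < \<delta>1" "h < \<delta>2"
      using \<open>\<delta>1 > 0\<close> \<open>\<delta>2 > 0\<close> by (auto simp: h_def)
    define \<Delta> where "\<Delta> = g (s + h) (t + h) - g (s + h) t - g s (t + h) + g s t"
    have "norm ((h * h) *\<^sub>R gxy s t - \<Delta>) \<le> \<epsilon> * h * h"
      using approx_xy[of h h] h by (simp add: \<Delta>_def norm_minus_commute)
    moreover have "norm (\<Delta> - (h * h) *\<^sub>R gyx s t) \<le> \<epsilon> * h * h"
      using approx_yx[of h h] h by (simp add: \<Delta>_def algebra_simps)
    ultimately have "norm ((h * h) *\<^sub>R gxy s t - (h * h) *\<^sub>R gyx s t) \<le> \<epsilon> * h * h + \<epsilon> * h * h"
      by (rule norm_diff_triangle_le)
    then have "(h * h) * norm (gxy s t - gyx s t) \<le> (h * h) * (2 * \<epsilon>)"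
      by (simp only: scaleR_diff_right[symmetric] norm_scaleR) (simp add: algebra_simps)
    then show ?thesis using h by (simp add: mult_le_cancel_left_pos)
  qed
  have "norm (gxy s t - gyx s t) \<le> 0"
  proof (rule field_le_epsilon)
    show "norm (gxy s t - gyx s t) \<le> 0 + e" if "e > 0" for e :: real
      using bound[of "e / 2"] that by simp
  qed
  then show ?thesis by simp
qed

lemma continuous_on_fun_upd2:
  "continuous_on UNIV (\<lambda>z::real \<times> real. (p(d := snd z))(c := fst z))"
proof (rule continuous_on_coordinatewise_then_product)
  show "continuous_on UNIV (\<lambda>z::real \<times> real. ((p(d := snd z))(c := fst z)) i)" for i
    by (cases "i = c"; cases "i = d") (auto intro: continuous_on_fst continuous_on_snd)
qed

lemma pdv_commute:
  fixes f :: "('c \<Rightarrow> real) \<Rightarrow> 'a::real_normed_vector"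
  assumes f: "smooth_fs UNIV f"
  shows "pdv c (pdv d f) p = pdv d (pdv c f) p"
proof (cases "c = d")
  case False
  define Q where "Q \<sigma> \<tau> = (p(d := \<tau>))(c := \<sigma>)" for \<sigma> \<tau>
  have Q_swap: "Q \<sigma> \<tau> = (p(c := \<sigma>))(d := \<tau>)" for \<sigma> \<tau>
    using False by (simp add: Q_def fun_upd_twist)
  have cont: "isCont (\<lambda>z. F (Q (fst z) (snd z))) (p c, p d)" if "smooth_fs UNIV F" for F :: "('c \<Rightarrow> real) \<Rightarrow> 'a"
  proof -
    have "continuous_on UNIV (\<lambda>z. F (Q (fst z) (snd z)))"
      unfolding Q_def
      by (rule continuous_on_compose2[OF smooth_fs_continuous_on[OF that] continuous_on_fun_upd2]) simp
    then show ?thesis by (simp add: continuous_on_eq_continuous_at)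
  qed
  note pd = smooth_fs_partially_differentiable
  have "pdv d (pdv c f) (Q (p c) (p d)) = pdv c (pdv d f) (Q (p c) (p d))"
  proof (rule mixed_partials_commute[where g = "\<lambda>\<sigma> \<tau>. f (Q \<sigma> \<tau>)"
        and gx = "\<lambda>\<sigma> \<tau>. pdv c f (Q \<sigma> \<tau>)" and gxy = "\<lambda>\<sigma> \<tau>. pdv d (pdv c f) (Q \<sigma> \<tau>)"
        and gy = "\<lambda>\<sigma> \<tau>. pdv d f (Q \<sigma> \<tau>)" and gyx = "\<lambda>\<sigma> \<tau>. pdv c (pdv d f) (Q \<sigma> \<tau>)"
        and s = "p c" and t = "p d"])
    show "((\<lambda>\<sigma>'. f (Q \<sigma>' \<tau>)) has_vector_derivative pdv c f (Q \<sigma> \<tau>)) (at \<sigma>)" for \<sigma> \<tau>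
      unfolding Q_def by (rule pdv_has_vector_derivative_upd[OF pd[OF f]])
    show "((\<lambda>\<tau>'. pdv c f (Q \<sigma> \<tau>')) has_vector_derivative pdv d (pdv c f) (Q \<sigma> \<tau>)) (at \<tau>)" for \<sigma> \<tau>
      unfolding Q_swap by (rule pdv_has_vector_derivative_upd[OF pd[OF smooth_fs_pdv[OF f]]])
    show "((\<lambda>\<tau>'. f (Q \<sigma> \<tau>')) has_vector_derivative pdv d f (Q \<sigma> \<tau>)) (at \<tau>)" for \<sigma> \<tau>
      unfolding Q_swap by (rule pdv_has_vector_derivative_upd[OF pd[OF f]])
    show "((\<lambda>\<sigma>'. pdv d f (Q \<sigma>' \<tau>)) has_vector_derivative pdv c (pdv d f) (Q \<sigma> \<tau>)) (at \<sigma>)" for \<sigma> \<tau>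
      unfolding Q_def by (rule pdv_has_vector_derivative_upd[OF pd[OF smooth_fs_pdv[OF f]]])
  qed (intro cont smooth_fs_pdv f)+
  then show ?thesis by (simp add: Q_def)
qed simp

definition vfield :: "('c \<Rightarrow> ('c \<Rightarrow> real) \<Rightarrow> real) \<Rightarrow> 'c set \<Rightarrow> (('c \<Rightarrow> real) \<Rightarrow> 'a::real_normed_vector) \<Rightarrow>
    ('c \<Rightarrow> real) \<Rightarrow> 'a" where
  "vfield a S f p = (\<Sum>c\<in>S. a c p *\<^sub>R pdv c f p)"

lemma vfield_bilinear:
  assumes B: "bounded_bilinear B" and "partially_differentiable f" "partially_differentiable g"
  shows "vfield a S (\<lambda>p. B (f p) (g p)) p = B (vfield a S f p) (g p) + B (f p) (vfield a S g p)"
  unfolding vfield_def pdv_bilinear[OF assms]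
  by (simp add: bounded_bilinear.sum_left[OF B] bounded_bilinear.sum_right[OF B]
      bounded_bilinear.scaleR_left[OF B] bounded_bilinear.scaleR_right[OF B] scaleR_right_distrib sum.distrib)

lemma vfield_add:
  assumes "partially_differentiable f" "partially_differentiable g"
  shows "vfield a S (\<lambda>p. f p + g p) p = vfield a S f p + vfield a S g p"
  unfolding vfield_def pdv_add[OF assms] by (simp add: scaleR_right_distrib sum.distrib)

lemma vfield_matrix_inv:
  fixes \<Phi> :: "('c \<Rightarrow> real) \<Rightarrow> complex^'n::finite^'n"
  assumes "partially_differentiable \<Phi>" "continuous_on UNIV \<Phi>" "\<And>p. invertible (\<Phi> p)"
  shows "vfield a S (\<lambda>p. matrix_inv (\<Phi> p)) p = - (matrix_inv (\<Phi> p) ** vfield a S \<Phi> p ** matrix_inv (\<Phi> p))"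
  unfolding vfield_def pdv_matrix_inv[OF assms]
  by (simp add: matrix_mult.sum_left matrix_mult.sum_right matrix_mult.scaleR_left
      matrix_mult.scaleR_right sum_negf)

lemma vfield_const: "vfield a S (\<lambda>p. k) p = 0"
  by (simp add: vfield_def pdv_const)

lemma vfield_component:
  assumes "finite S"
  shows "vfield a S (\<lambda>p. p d) p = (if d \<in> S then a d p else 0)"
proof -
  have "a c p * (if c = d then 1 else 0) = (if c = d then a c p else 0)" for c
    by simp
  then show ?thesis using assms by (simp add: vfield_def pdv_component)
qed

lemma depends_on_vfield:
  assumes "depends_on S f" "\<And>c. c \<in> S \<Longrightarrow> depends_on T (a c)" "S \<subseteq> T"
  shows "depends_on T (vfield a S f)"
  unfolding depends_on_def vfield_def
proof (intro allI impI sum.cong refl)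
  fix p q :: "'a \<Rightarrow> real" and c assume pq: "\<forall>c\<in>T. p c = q c" and c: "c \<in> S"
  have "a c p = a c q" using assms(2)[OF c] pq unfolding depends_on_def by blast
  moreover have "pdv c f p = pdv c f q"
    using depends_on_mono[OF depends_on_pdv[OF assms(1)] assms(3)] pq unfolding depends_on_def by blast
  ultimately show "a c p *\<^sub>R pdv c f p = a c q *\<^sub>R pdv c f q" by simp
qed

lemma smooth_fs_vfield:
  assumes "finite S" "\<And>c. c \<in> S \<Longrightarrow> smooth_fs UNIV (a c)" "smooth_fs UNIV f"
  shows "smooth_fs UNIV (vfield a S f)"
  unfolding vfield_def[abs_def] using assms by (intro smooth_fs_sum smooth_fs_scaleR smooth_fs_pdv)

lemma vfield_vfield:
  fixes f :: "('c \<Rightarrow> real) \<Rightarrow> 'a::real_normed_vector"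
  assumes f: "smooth_fs UNIV f" "finite S" "depends_on S f" and T: "finite T" "S \<subseteq> T"
    and b: "\<And>c. c \<in> S \<Longrightarrow> partially_differentiable (b c)"
  shows "vfield a T (vfield b S f) p = (\<Sum>c\<in>S. vfield a T (b c) p *\<^sub>R pdv c f p)
           + (\<Sum>d\<in>S. \<Sum>c\<in>S. (a d p * b c p) *\<^sub>R pdv d (pdv c f) p)"
proof -
  have pd: "partially_differentiable (pdv c f)" for c
    by (rule smooth_fs_partially_differentiable[OF smooth_fs_pdv[OF f(1)]])
  have "pdv d (vfield b S f) q = (\<Sum>c\<in>S. pdv d (b c) q *\<^sub>R pdv c f q + b c q *\<^sub>R pdv d (pdv c f) q)" for d q
    unfolding vfield_def[abs_def] using f(2) b pd
    by (simp add: pdv_sum partially_differentiable_bilinear[OF bounded_bilinear_scaleR]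
        pdv_bilinear[OF bounded_bilinear_scaleR] add.commute)
  then have "vfield a T (vfield b S f) p =
      (\<Sum>d\<in>T. \<Sum>c\<in>S. (a d p * pdv d (b c) p) *\<^sub>R pdv c f p) + (\<Sum>d\<in>T. \<Sum>c\<in>S. (a d p * b c p) *\<^sub>R pdv d (pdv c f) p)"
    unfolding vfield_def by (simp add: scaleR_sum_right scaleR_right_distrib sum.distrib)
  also have "(\<Sum>d\<in>T. \<Sum>c\<in>S. (a d p * pdv d (b c) p) *\<^sub>R pdv c f p) = (\<Sum>c\<in>S. vfield a T (b c) p *\<^sub>R pdv c f p)"
    by (subst sum.swap) (simp add: vfield_def scaleR_sum_left)
  also have "(\<Sum>d\<in>T. \<Sum>c\<in>S. (a d p * b c p) *\<^sub>R pdv d (pdv c f) p) = (\<Sum>d\<in>S. \<Sum>c\<in>S. (a d p * b c p) *\<^sub>R pdv d (pdv c f) p)"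
    using T by (intro sum.mono_neutral_right) (auto simp: pdv_eq_0_if_depends_on[OF depends_on_pdv[OF f(3)]])
  finally show ?thesis .
qed

lemma vfield_commutator:
  fixes f :: "('c \<Rightarrow> real) \<Rightarrow> 'a::real_normed_vector"
  assumes f: "smooth_fs UNIV f" "finite S" "depends_on S f" and T: "finite T" "S \<subseteq> T"
    and a: "\<And>c. c \<in> S \<Longrightarrow> partially_differentiable (a c)"
    and b: "\<And>c. c \<in> S \<Longrightarrow> partially_differentiable (b c)"
  shows "vfield a T (vfield b S f) p - vfield b T (vfield a S f) p =
    (\<Sum>c\<in>S. (vfield a T (b c) p - vfield b T (a c) p) *\<^sub>R pdv c f p)"
proof -
  have "(\<Sum>d\<in>S. \<Sum>c\<in>S. (b d p * a c p) *\<^sub>R pdv d (pdv c f) p) =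
      (\<Sum>d\<in>S. \<Sum>c\<in>S. (a d p * b c p) *\<^sub>R pdv d (pdv c f) p)"
    by (subst sum.swap) (simp add: pdv_commute[OF f(1)] mult.commute)
  with vfield_vfield[OF f T b, where a = a and p = p] vfield_vfield[OF f T a, where a = b and p = p] show ?thesis
    by (simp add: scaleR_diff_left sum_subtractf)
qed

lemma vfield_commute:
  fixes f :: "('c \<Rightarrow> real) \<Rightarrow> 'a::real_normed_vector"
  assumes f: "smooth_fs UNIV f" "finite S" "depends_on S f" and T: "finite T" "S \<subseteq> T"
    and a: "\<And>c. c \<in> S \<Longrightarrow> partially_differentiable (a c)"
    and b: "\<And>c. c \<in> S \<Longrightarrow> partially_differentiable (b c)"
    and coeff: "\<And>c. c \<in> S \<Longrightarrow> vfield a T (b c) p = vfield b T (a c) p"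
  shows "vfield a T (vfield b S f) p = vfield b T (vfield a S f) p"
proof -
  have "vfield a T (vfield b S f) p - vfield b T (vfield a S f) p =
      (\<Sum>c\<in>S. (vfield a T (b c) p - vfield b T (a c) p) *\<^sub>R pdv c f p)"
    by (rule vfield_commutator[OF f T]) (simp_all add: a b)
  also have "\<dots> = 0"
    by (intro sum.neutral) (simp add: coeff)
  finally show ?thesis by simp
qed

section \<open>Total derivatives and prolonged vector fields on the jet space\<close>

definition totD_coeff :: "'m \<Rightarrow> ('m, 'n) jcoord \<Rightarrow> ('m, 'n) jpt \<Rightarrow> real" where
  "totD_coeff \<alpha> c = (case c of Xc \<beta> \<Rightarrow> (\<lambda>p. if \<beta> = \<alpha> then 1 else 0) | Uc i J \<Rightarrow> (\<lambda>p. p (Uc i (add_mset \<alpha> J))))"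

definition prX_coeff :: "('n \<Rightarrow> ('m::linorder, 'n) jpt \<Rightarrow> real) \<Rightarrow> ('m, 'n) jcoord \<Rightarrow> ('m, 'n) jpt \<Rightarrow> real" where
  "prX_coeff R c = (case c of Xc \<beta> \<Rightarrow> (\<lambda>p. 0) | Uc i J \<Rightarrow> totDJ J (R i))"

definition shift_coords :: "'m \<Rightarrow> ('m, 'n) jcoord set \<Rightarrow> ('m, 'n) jcoord set" where
  "shift_coords \<alpha> S = S \<union> (\<lambda>c. case c of Xc \<beta> \<Rightarrow> Xc \<beta> | Uc i J \<Rightarrow> Uc i (add_mset \<alpha> J)) ` S"

lemma finite_shift_coords: "finite S \<Longrightarrow> finite (shift_coords \<alpha> S)"
  by (simp add: shift_coords_def)

lemma subset_shift_coords: "S \<subseteq> shift_coords \<alpha> S"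
  by (simp add: shift_coords_def)

lemma Uc_add_mset_in_shift_coords: "Uc i J \<in> S \<Longrightarrow> Uc i (add_mset \<alpha> J) \<in> shift_coords \<alpha> S"
  unfolding shift_coords_def by (rule UnI2, rule image_eqI[where x = "Uc i J"]) simp_all

lemma sum_jcoord_split:
  assumes S: "finite S"
  shows "(\<Sum>c\<in>S. g c) = (\<Sum>\<beta>\<in>Xc -` S. g (Xc \<beta>)) + (\<Sum>(i, J)\<in>case_prod Uc -` S. g (Uc i J))"
proof -
  have S_eq: "S = Xc ` (Xc -` S) \<union> case_prod Uc ` (case_prod Uc -` S)"
  proof (rule set_eqI)
    show "c \<in> S \<longleftrightarrow> c \<in> Xc ` (Xc -` S) \<union> case_prod Uc ` (case_prod Uc -` S)" for c
      by (cases c) auto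
  qed
  have "(\<Sum>c\<in>S. g c) = (\<Sum>c\<in>Xc ` (Xc -` S). g c) + (\<Sum>c\<in>case_prod Uc ` (case_prod Uc -` S). g c)"
    by (subst S_eq, rule sum.union_disjoint) (use S in auto)
  also have "(\<Sum>c\<in>Xc ` (Xc -` S). g c) = (\<Sum>\<beta>\<in>Xc -` S. g (Xc \<beta>))"
    by (rule sum.reindex_cong[of Xc]) (auto simp: inj_on_def)
  also have "(\<Sum>c\<in>case_prod Uc ` (case_prod Uc -` S). g c) = (\<Sum>(i, J)\<in>case_prod Uc -` S. g (Uc i J))"
    by (rule sum.reindex_cong[of "case_prod Uc"]) (auto simp: inj_on_def)
  finally show ?thesis .
qed

lemma totD_eq_vfield:
  assumes S: "finite S" "depends_on S f"
  shows "totD \<alpha> f = vfield (totD_coeff \<alpha>) S f"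
proof
  fix p
  have fin: "finite (Xc -` S)" "finite (case_prod Uc -` S)"
    by (simp_all add: finite_vimageI[OF S(1)] inj_def)
  have "vfield (totD_coeff \<alpha>) S f p = (\<Sum>\<beta>\<in>Xc -` S. (if \<beta> = \<alpha> then 1 else 0) *\<^sub>R pdv (Xc \<beta>) f p)
      + (\<Sum>(i, J)\<in>case_prod Uc -` S. p (Uc i (add_mset \<alpha> J)) *\<^sub>R pdv (Uc i J) f p)"
    unfolding vfield_def by (subst sum_jcoord_split[OF S(1)]) (simp add: totD_coeff_def)
  also have "(\<Sum>\<beta>\<in>Xc -` S. (if \<beta> = \<alpha> then 1 else 0) *\<^sub>R pdv (Xc \<beta>) f p) =
      (\<Sum>\<beta>\<in>Xc -` S. if \<beta> = \<alpha> then pdv (Xc \<beta>) f p else 0)"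
    by (rule sum.cong) auto
  also have "\<dots> = pdv (Xc \<alpha>) f p"
    using fin pdv_eq_0_if_depends_on[OF S(2), of "Xc \<alpha>"] by simp
  also have "(\<Sum>(i, J)\<in>case_prod Uc -` S. p (Uc i (add_mset \<alpha> J)) *\<^sub>R pdv (Uc i J) f p) =
      (\<Sum>(i, J)\<in>{(i, J). pdv (Uc i J) f p \<noteq> 0}. p (Uc i (add_mset \<alpha> J)) *\<^sub>R pdv (Uc i J) f p)"
    using fin pdv_eq_0_if_depends_on[OF S(2)] by (intro sum.mono_neutral_right) (auto, blast)
  finally show "totD \<alpha> f p = vfield (totD_coeff \<alpha>) S f p"
    unfolding totD_def by simp
qed

lemma prX_eq_vfield:
  assumes S: "finite S" "depends_on S f"
  shows "prX R f = vfield (prX_coeff R) S f"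
proof
  fix p
  have fin: "finite (case_prod Uc -` S)"
    by (simp add: finite_vimageI[OF S(1)] inj_def)
  have "vfield (prX_coeff R) S f p = (\<Sum>(i, J)\<in>case_prod Uc -` S. totDJ J (R i) p *\<^sub>R pdv (Uc i J) f p)"
    unfolding vfield_def by (subst sum_jcoord_split[OF S(1)]) (simp add: prX_coeff_def)
  also have "\<dots> = (\<Sum>(i, J)\<in>{(i, J). pdv (Uc i J) f p \<noteq> 0}. totDJ J (R i) p *\<^sub>R pdv (Uc i J) f p)"
    using fin pdv_eq_0_if_depends_on[OF S(2)] by (intro sum.mono_neutral_right) (auto, blast)
  finally show "prX R f p = vfield (prX_coeff R) S f p"
    unfolding prX_def by simp
qed

lemma smooth_fs_totD_coeff: "smooth_fs UNIV (totD_coeff \<alpha> c)"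
  by (cases c) (simp_all add: totD_coeff_def smooth_fs_const smooth_fs_component)

lemma depends_on_totD_coeff: "c \<in> S \<Longrightarrow> depends_on (shift_coords \<alpha> S) (totD_coeff \<alpha> c)"
  by (cases c) (auto simp: totD_coeff_def depends_on_def dest: Uc_add_mset_in_shift_coords)

lemma smooth_fs_totD: "smooth_fs UNIV f \<Longrightarrow> smooth_fs UNIV (totD \<alpha> f)"
  by (metis smooth_fs_depends_on totD_eq_vfield smooth_fs_vfield smooth_fs_totD_coeff)

lemma depends_on_totD:
  assumes "finite S" "depends_on S f"
  shows "depends_on (shift_coords \<alpha> S) (totD \<alpha> f)"
  unfolding totD_eq_vfield[OF assms]
  by (rule depends_on_vfield[OF assms(2) depends_on_totD_coeff subset_shift_coords])

lemma smooth_fs_foldr_totD: "smooth_fs UNIV f \<Longrightarrow> smooth_fs UNIV (foldr totD xs f)"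
  by (induction xs) (simp_all add: smooth_fs_totD)

lemma smooth_fs_totDJ: "smooth_fs UNIV f \<Longrightarrow> smooth_fs UNIV (totDJ J f)"
  unfolding totDJ_def by (rule smooth_fs_foldr_totD)

lemma smooth_fs_prX_coeff: "(\<And>i. smooth_fs UNIV (R i)) \<Longrightarrow> smooth_fs UNIV (prX_coeff R c)"
  by (cases c) (simp_all add: prX_coeff_def smooth_fs_const smooth_fs_totDJ)

lemma smooth_fs_prX:
  "(\<And>i. smooth_fs UNIV (R i)) \<Longrightarrow> smooth_fs UNIV f \<Longrightarrow> smooth_fs UNIV (prX R f)"
  by (metis smooth_fs_depends_on prX_eq_vfield smooth_fs_vfield smooth_fs_prX_coeff)

lemma totD_coeff_commute:
  assumes T: "finite T" "shift_coords \<alpha> S \<subseteq> T" "shift_coords \<beta> S \<subseteq> T" and "c \<in> S"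
  shows "vfield (totD_coeff \<alpha>) T (totD_coeff \<beta> c) p = vfield (totD_coeff \<beta>) T (totD_coeff \<alpha> c) p"
proof (cases c)
  case (Uc i J)
  have "Uc i (add_mset \<beta> J) \<in> T" "Uc i (add_mset \<alpha> J) \<in> T"
    using Uc_add_mset_in_shift_coords[of i J S] \<open>c \<in> S\<close> T(2,3) Uc by auto
  then show ?thesis
    using Uc by (simp add: totD_coeff_def vfield_component[OF T(1)] add_mset_commute[of \<alpha> \<beta> J])
qed (simp add: totD_coeff_def vfield_const)

lemma totD_commute:
  assumes f: "smooth_fs UNIV f"
  shows "totD \<alpha> (totD \<beta> f) p = totD \<beta> (totD \<alpha> f) p"
proof -
  obtain S where S: "finite S" "depends_on S f" using smooth_fs_depends_on[OF f] by blast
  define T where "T = shift_coords \<alpha> (shift_coords \<beta> S) \<union> shift_coords \<beta> (shift_coords \<alpha> S)"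
  have T: "finite T" "shift_coords \<beta> S \<subseteq> T" "shift_coords \<alpha> S \<subseteq> T"
    using S(1) subset_shift_coords[of "shift_coords \<beta> S" \<alpha>] subset_shift_coords[of "shift_coords \<alpha> S" \<beta>]
    by (auto simp: T_def finite_shift_coords)
  then have "S \<subseteq> T" using subset_shift_coords[of S \<beta>] by blast
  have "vfield (totD_coeff \<alpha>) T (vfield (totD_coeff \<beta>) S f) p = vfield (totD_coeff \<beta>) T (vfield (totD_coeff \<alpha>) S f) p"
    using T by (intro vfield_commute[OF f S T(1) \<open>S \<subseteq> T\<close>] totD_coeff_commute)
      (simp_all add: smooth_fs_partially_differentiable smooth_fs_totD_coeff)
  then show ?thesis
    using totD_eq_vfield[OF T(1) depends_on_mono[OF depends_on_totD[OF S] T(2)], of \<alpha>]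
      totD_eq_vfield[OF T(1) depends_on_mono[OF depends_on_totD[OF S] T(3)], of \<beta>]
    by (simp add: totD_eq_vfield[OF S])
qed

lemma totDJ_add_mset:
  assumes f: "smooth_fs UNIV f"
  shows "totDJ (add_mset \<alpha> J) f = totD \<alpha> (totDJ J f)"
proof -
  have "foldr totD (insort \<alpha> xs) f = totD \<alpha> (foldr totD xs f)" for xs
  proof (induction xs)
    case (Cons \<beta> xs)
    have "totD \<beta> (totD \<alpha> (foldr totD xs f)) = totD \<alpha> (totD \<beta> (foldr totD xs f))"
      by (rule ext, rule totD_commute[OF smooth_fs_foldr_totD[OF f]])
    then show ?case using Cons by simp
  qed simp
  then show ?thesis by (simp add: totDJ_def)
qed

lemma totD_prX_coeff_commute:
  assumes R: "\<And>i. smooth_fs UNIV (R i)"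
    and T: "finite T" "shift_coords \<alpha> S \<subseteq> T" and "c \<in> S" "depends_on T (prX_coeff R c)"
  shows "vfield (totD_coeff \<alpha>) T (prX_coeff R c) p = vfield (prX_coeff R) T (totD_coeff \<alpha> c) p"
proof (cases c)
  case (Uc i J)
  have "Uc i (add_mset \<alpha> J) \<in> T"
    using Uc_add_mset_in_shift_coords[of i J S] \<open>c \<in> S\<close> T(2) Uc by auto
  moreover have "depends_on T (totDJ J (R i))"
    using \<open>depends_on T (prX_coeff R c)\<close> Uc by (simp add: prX_coeff_def)
  ultimately show ?thesis
    using Uc T(1) totD_eq_vfield[of T "totDJ J (R i)" \<alpha>]
    by (simp add: prX_coeff_def totD_coeff_def vfield_component totDJ_add_mset[OF R])
qed (simp add: totD_coeff_def prX_coeff_def vfield_const)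

lemma totD_prX_commute:
  assumes R: "\<And>i. smooth_fs UNIV (R i)" and f: "smooth_fs UNIV f"
  shows "totD \<alpha> (prX R f) p = prX R (totD \<alpha> f) p"
proof -
  obtain S where S: "finite S" "depends_on S f" using smooth_fs_depends_on[OF f] by blast
  have "\<exists>T. finite T \<and> depends_on T (prX_coeff R c)" for c
    by (rule smooth_fs_depends_on[OF smooth_fs_prX_coeff[OF R]])
  then obtain Tc where Tc: "\<And>c. finite (Tc c)" "\<And>c. depends_on (Tc c) (prX_coeff R c)"
    by (metis someI_ex)
  define T where "T = shift_coords \<alpha> S \<union> (\<Union>c\<in>S. Tc c)"
  have T: "finite T" "shift_coords \<alpha> S \<subseteq> T" "\<And>c. c \<in> S \<Longrightarrow> Tc c \<subseteq> T"
    using S(1) Tc(1) by (auto simp: T_def finite_shift_coords)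
  have "S \<subseteq> T" using subset_shift_coords[of S \<alpha>] T(2) by (rule subset_trans)
  have coeff: "c \<in> S \<Longrightarrow> depends_on T (prX_coeff R c)" for c
    using depends_on_mono[OF Tc(2) T(3)] .
  have "vfield (totD_coeff \<alpha>) T (vfield (prX_coeff R) S f) p = vfield (prX_coeff R) T (vfield (totD_coeff \<alpha>) S f) p"
    using T(1,2) coeff
    by (intro vfield_commute[OF f S T(1) \<open>S \<subseteq> T\<close>] totD_prX_coeff_commute[OF R])
      (simp_all add: smooth_fs_partially_differentiable smooth_fs_totD_coeff smooth_fs_prX_coeff R)
  then show ?thesis
    using totD_eq_vfield[OF T(1) depends_on_vfield[OF S(2) coeff \<open>S \<subseteq> T\<close>], where \<alpha> = \<alpha>]
      prX_eq_vfield[OF T(1) depends_on_mono[OF depends_on_totD[OF S] T(2)], where R = R]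
    by (simp add: totD_eq_vfield[OF S] prX_eq_vfield[OF S])
qed

lemma totD_bilinear:
  assumes B: "bounded_bilinear B" and "smooth_fs UNIV f" "smooth_fs UNIV g"
  shows "totD \<alpha> (\<lambda>p. B (f p) (g p)) p = B (totD \<alpha> f p) (g p) + B (f p) (totD \<alpha> g p)"
proof -
  obtain S where S: "finite S" "depends_on S f" "depends_on S g"
    using smooth_fs_common_depends_on[OF assms(2,3)] .
  have dep: "depends_on S (\<lambda>p. B (f p) (g p))"
    using depends_on_comp2[OF S(2,3)] by simp
  show ?thesis
    unfolding totD_eq_vfield[OF S(1) dep] totD_eq_vfield[OF S(1,2)]
      totD_eq_vfield[OF S(1,3)]
    by (rule vfield_bilinear[OF B]) (simp_all add: smooth_fs_partially_differentiable assms)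
qed

lemma prX_bilinear:
  assumes B: "bounded_bilinear B" and "smooth_fs UNIV f" "smooth_fs UNIV g"
  shows "prX R (\<lambda>p. B (f p) (g p)) p = B (prX R f p) (g p) + B (f p) (prX R g p)"
proof -
  obtain S where S: "finite S" "depends_on S f" "depends_on S g"
    using smooth_fs_common_depends_on[OF assms(2,3)] .
  have dep: "depends_on S (\<lambda>p. B (f p) (g p))"
    using depends_on_comp2[OF S(2,3)] by simp
  show ?thesis
    unfolding prX_eq_vfield[OF S(1) dep] prX_eq_vfield[OF S(1,2)]
      prX_eq_vfield[OF S(1,3)]
    by (rule vfield_bilinear[OF B]) (simp_all add: smooth_fs_partially_differentiable assms)
qed

lemma prX_add:
  assumes "smooth_fs UNIV f" "smooth_fs UNIV g"
  shows "prX R (\<lambda>p. f p + g p) p = prX R f p + prX R g p"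
proof -
  obtain S where S: "finite S" "depends_on S f" "depends_on S g"
    using smooth_fs_common_depends_on[OF assms] .
  have dep: "depends_on S (\<lambda>p. f p + g p)"
    using depends_on_comp2[OF S(2,3)] by simp
  show ?thesis
    unfolding prX_eq_vfield[OF S(1) dep] prX_eq_vfield[OF S(1,2)]
      prX_eq_vfield[OF S(1,3)]
    by (rule vfield_add) (simp_all add: smooth_fs_partially_differentiable assms)
qed

lemma totD_matrix_inv:
  fixes \<Phi> :: "('m::linorder, 'n) jpt \<Rightarrow> complex^'k::finite^'k"
  assumes \<Phi>: "smooth_fs UNIV \<Phi>" and inv: "\<And>p. invertible (\<Phi> p)"
  shows "totD \<alpha> (\<lambda>p. matrix_inv (\<Phi> p)) p = - (matrix_inv (\<Phi> p) ** totD \<alpha> \<Phi> p ** matrix_inv (\<Phi> p))"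
proof -
  obtain S where S: "finite S" "depends_on S \<Phi>" using smooth_fs_depends_on[OF \<Phi>] by blast
  show ?thesis
    unfolding totD_eq_vfield[OF S(1) depends_on_comp[OF S(2)]] totD_eq_vfield[OF S]
    by (rule vfield_matrix_inv[OF smooth_fs_partially_differentiable[OF \<Phi>] smooth_fs_continuous_on[OF \<Phi>] inv])
qed

section \<open>Lie algebras of matrix Lie groups\<close>

lemma lie_algebra_zero: "mat 1 \<in> G \<Longrightarrow> 0 \<in> lie_algebra G"
  unfolding lie_algebra_def
  by (rule CollectI, rule exI[of _ "\<lambda>t. mat 1"], rule exI[of _ 1]) (auto intro: has_vector_derivative_const)

lemma lie_algebra_add:
  assumes G: "\<And>A B. A \<in> G \<Longrightarrow> B \<in> G \<Longrightarrow> A ** B \<in> G"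
    and X: "X \<in> lie_algebra G" and Y: "Y \<in> lie_algebra G"
  shows "X + Y \<in> lie_algebra G"
proof -
  obtain \<gamma>1 e1 where \<gamma>1: "e1 > 0" "\<And>t. \<bar>t\<bar> < e1 \<Longrightarrow> \<gamma>1 t \<in> G" "\<gamma>1 0 = mat 1"
    "(\<gamma>1 has_vector_derivative X) (at 0)" using X unfolding lie_algebra_def by blast
  obtain \<gamma>2 e2 where \<gamma>2: "e2 > 0" "\<And>t. \<bar>t\<bar> < e2 \<Longrightarrow> \<gamma>2 t \<in> G" "\<gamma>2 0 = mat 1"
    "(\<gamma>2 has_vector_derivative Y) (at 0)" using Y unfolding lie_algebra_def by blast
  have "((\<lambda>t. \<gamma>1 t ** \<gamma>2 t) has_vector_derivative X + Y) (at 0)"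
    using matrix_mult.has_vector_derivative[OF \<gamma>1(4) \<gamma>2(4)] \<gamma>1(3) \<gamma>2(3) by (simp add: add.commute)
  then show ?thesis unfolding lie_algebra_def
    using \<gamma>1 \<gamma>2 G by (intro CollectI exI[of _ "\<lambda>t. \<gamma>1 t ** \<gamma>2 t"] exI[of _ "min e1 e2"]) auto
qed

lemma lie_algebra_scaleR:
  assumes X: "X \<in> lie_algebra G"
  shows "r *\<^sub>R X \<in> lie_algebra G"
proof -
  obtain \<gamma> e where \<gamma>: "e > 0" "\<And>t. \<bar>t\<bar> < e \<Longrightarrow> \<gamma> t \<in> G" "\<gamma> 0 = mat 1"
    "(\<gamma> has_vector_derivative X) (at 0)" using X unfolding lie_algebra_def by blast
  define e' where "e' = e / (\<bar>r\<bar> + 1)"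
  have "e' > 0" using \<gamma>(1) by (simp add: e'_def)
  have "\<gamma> (r * t) \<in> G" if "\<bar>t\<bar> < e'" for t
  proof -
    have "\<bar>r * t\<bar> \<le> (\<bar>r\<bar> + 1) * \<bar>t\<bar>" by (simp add: abs_mult mult_right_mono)
    also have "\<dots> < (\<bar>r\<bar> + 1) * e'" using that by (intro mult_strict_left_mono) auto
    also have "\<dots> = e" by (simp add: e'_def)
    finally show ?thesis using \<gamma>(2) by blast
  qed
  moreover have "((\<lambda>t. r * t) has_vector_derivative r) (at 0)"
    using has_real_derivative_iff_has_vector_derivative[THEN iffD1, OF DERIV_cmult_Id[of r 0]] by simp
  then have "((\<lambda>t. \<gamma> (r * t)) has_vector_derivative r *\<^sub>R X) (at 0)"
    using vector_diff_chain_at[of "\<lambda>t. r * t" r 0 \<gamma> X] \<gamma>(4) by (simp add: o_def)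
  ultimately show ?thesis unfolding lie_algebra_def
    using \<open>e' > 0\<close> \<gamma>(3) by (intro CollectI exI[of _ "\<lambda>t. \<gamma> (r * t)"] exI[of _ e']) auto
qed

lemma lie_algebra_sum:
  assumes G: "mat 1 \<in> G" "\<And>A B. A \<in> G \<Longrightarrow> B \<in> G \<Longrightarrow> A ** B \<in> G"
    and X: "\<And>i. i \<in> I \<Longrightarrow> X i \<in> lie_algebra G"
  shows "sum X I \<in> lie_algebra G"
  using X
  by (induction I rule: infinite_finite_induct) (simp_all add: lie_algebra_zero[OF G(1)] lie_algebra_add[OF G(2)])

text \<open>\<open>\<Phi>(q)\<^sup>-\<^sup>1 \<Phi>(q + t e\<^sub>c)\<close> is a curve in \<^term>\<open>G\<close> through the identity.\<close>
lemma matrix_inv_mult_pdv_in_lie_algebra: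
  fixes \<Phi> :: "('c \<Rightarrow> real) \<Rightarrow> complex^'n::finite^'n"
  assumes G: "matrix_lie_group G" and \<Phi>: "\<And>q. \<Phi> q \<in> G" "partially_differentiable \<Phi>"
  shows "matrix_inv (\<Phi> q) ** pdv c \<Phi> q \<in> lie_algebra G"
proof -
  have shift: "((\<lambda>t. q c + t) has_vector_derivative 1) (at 0)"
    by (auto intro!: derivative_eq_intros)
  have "((\<lambda>s. \<Phi> (q(c := s))) has_vector_derivative pdv c \<Phi> q) (at ((\<lambda>t. q c + t) 0))"
    using pdv_has_vector_derivative[OF \<Phi>(2), of q c] by simp
  from vector_diff_chain_at[OF shift this]
  have "((\<lambda>t. \<Phi> (q(c := q c + t))) has_vector_derivative pdv c \<Phi> q) (at 0)"
    by (simp add: o_def)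
  then have "((\<lambda>t. matrix_inv (\<Phi> q) ** \<Phi> (q(c := q c + t))) has_vector_derivative
      matrix_inv (\<Phi> q) ** pdv c \<Phi> q) (at 0)"
    using matrix_mult.has_vector_derivative[OF has_vector_derivative_const] by fastforce
  moreover have "matrix_inv (\<Phi> q) ** \<Phi> (q(c := q c + 0)) = mat 1"
    using G \<Phi>(1) by (simp add: matrix_lie_group_def subset_iff matrix_inv_left)
  moreover have "matrix_inv (\<Phi> q) ** \<Phi> (q(c := q c + t)) \<in> G" for t
    using G \<Phi>(1) by (simp add: matrix_lie_group_def)
  ultimately show ?thesis unfolding lie_algebra_def
    by (intro CollectI exI[of _ "\<lambda>t. matrix_inv (\<Phi> q) ** \<Phi> (q(c := q c + t))"] exI[of _ 1]) auto
qed

lemma matrix_inv_mult_prX_in_lie_algebra: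
  fixes \<Phi> :: "('m::linorder, 'n) jpt \<Rightarrow> complex^'k::finite^'k"
  assumes G: "matrix_lie_group G" and \<Phi>: "\<And>q. \<Phi> q \<in> G" "partially_differentiable \<Phi>"
  shows "matrix_inv (\<Phi> q) ** prX R \<Phi> q \<in> lie_algebra G"
proof -
  have "matrix_inv (\<Phi> q) ** prX R \<Phi> q =
      (\<Sum>(i, J)\<in>{(i, J). pdv (Uc i J) \<Phi> q \<noteq> 0}. totDJ J (R i) q *\<^sub>R (matrix_inv (\<Phi> q) ** pdv (Uc i J) \<Phi> q))"
    unfolding prX_def by (simp add: matrix_mult.sum_right matrix_mult.scaleR_right case_prod_unfold)
  also have "\<dots> \<in> lie_algebra G"
  proof (rule lie_algebra_sum)
    show "(case x of (i, J) \<Rightarrow> totDJ J (R i) q *\<^sub>R (matrix_inv (\<Phi> q) ** pdv (Uc i J) \<Phi> q)) \<in> lie_algebra G"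
      for x
      by (cases x) (simp add: lie_algebra_scaleR matrix_inv_mult_pdv_in_lie_algebra[OF G \<Phi>])
  qed (use G in \<open>auto simp: matrix_lie_group_def\<close>)
  finally show ?thesis .
qed

lemma totD_matrix_inv_mult_prX:
  fixes \<Phi> U :: "('m::linorder, 'n) jpt \<Rightarrow> complex^'k::finite^'k"
  assumes R: "\<And>i. smooth_fs UNIV (R i)" and \<Phi>: "smooth_fs UNIV \<Phi>" "\<And>q. invertible (\<Phi> q)"
    and U: "smooth_fs UNIV U" and lsp: "totD \<alpha> \<Phi> q = U q ** \<Phi> q"
  shows "totD \<alpha> (\<lambda>q'. matrix_inv (\<Phi> q') ** prX R \<Phi> q') q =
    matrix_inv (\<Phi> q) ** (prX R U q + prX R (\<lambda>q'. totD \<alpha> \<Phi> q' - U q' ** \<Phi> q') q ** matrix_inv (\<Phi> q))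
      ** \<Phi> q"
proof -
  define \<Psi> where "\<Psi> q' = matrix_inv (\<Phi> q')" for q'
  define E where "E q' = totD \<alpha> \<Phi> q' - U q' ** \<Phi> q'" for q'
  have smooth: "smooth_fs UNIV \<Psi>" "smooth_fs UNIV (prX R \<Phi>)" "smooth_fs UNIV E"
    "smooth_fs UNIV (\<lambda>q'. U q' ** \<Phi> q')"
    using \<Phi> U R unfolding \<Psi>_def[abs_def] E_def[abs_def]
    by (auto intro: smooth_fs_matrix_inv smooth_fs_prX smooth_fs_diff smooth_fs_totD smooth_fs_matrix_mult)
  have "totD \<alpha> \<Phi> = (\<lambda>q'. E q' + U q' ** \<Phi> q')"
    by (simp add: E_def)
  then have "prX R (totD \<alpha> \<Phi>) q = prX R E q + prX R U q ** \<Phi> q + U q ** prX R \<Phi> q"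
    using prX_add[OF smooth(3,4)] prX_bilinear[OF bounded_bilinear_matrix_mult U \<Phi>(1)] by simp
  moreover have "totD \<alpha> (\<lambda>q'. \<Psi> q' ** prX R \<Phi> q') q = totD \<alpha> \<Psi> q ** prX R \<Phi> q + \<Psi> q ** totD \<alpha> (prX R \<Phi>) q"
    by (rule totD_bilinear[OF bounded_bilinear_matrix_mult smooth(1,2)])
  moreover have "totD \<alpha> \<Psi> q = - (\<Psi> q ** (U q ** \<Phi> q) ** \<Psi> q)"
    unfolding \<Psi>_def[abs_def] totD_matrix_inv[OF \<Phi>] lsp ..
  moreover have "totD \<alpha> (prX R \<Phi>) q = prX R (totD \<alpha> \<Phi>) q"
    by (rule totD_prX_commute[OF R \<Phi>(1)])
  moreover have "Y ** \<Psi> q ** \<Phi> q = Y" "Y ** \<Phi> q ** \<Psi> q = Y" for Y :: "complex^'k^'k"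
    by (simp_all add: \<Psi>_def matrix_inv_left matrix_inv_right \<Phi>(2) flip: matrix_mul_assoc)
  ultimately show ?thesis
    unfolding \<Psi>_def[symmetric] E_def[symmetric]
    by (simp add: matrix_add_ldistrib matrix_add_rdistrib matrix_mult.minus_left matrix_mul_assoc)
qed

theorem theorem8:
  fixes \<Delta> :: "'mu::finite \<Rightarrow> ('m::{finite,linorder}, 'n::finite) jpt \<Rightarrow> real"
    and p :: nat
    and \<Theta> :: "'nu::finite \<Rightarrow> ('m, 'n) jpt \<Rightarrow> real"
    and G :: "(complex^'k::finite^'k) set"
    and \<Lambda> :: "complex set"
    and U :: "'m \<Rightarrow> complex \<Rightarrow> ('m, 'n) jpt \<Rightarrow> complex^'k^'k"
    and \<Phi> :: "complex \<Rightarrow> ('m, 'n) jpt \<Rightarrow> complex^'k^'k"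
    and R :: "'n \<Rightarrow> ('m, 'n) jpt \<Rightarrow> real"
  assumes G: "matrix_lie_group G"
    and \<Delta>_smooth: "\<forall>\<mu>. smooth_fs UNIV (\<Delta> \<mu>)"
    and \<Delta>_order: "\<forall>\<mu>. jet_order_le p (\<Delta> \<mu>)"
    and \<Delta>_rank: "maximal_rank \<Delta>"
    and \<Delta>_solv: "locally_solvable p \<Delta>"
    and \<Theta>_smooth: "\<forall>\<nu>. smooth_fs UNIV (\<Theta> \<nu>)"
    and U_form: "\<forall>lam\<in>\<Lambda>. \<forall>\<alpha>. smooth_fs UNIV (U \<alpha> lam) \<and> (\<forall>q. U \<alpha> lam q \<in> lie_algebra G)"
    and \<Phi>_G: "\<forall>lam\<in>\<Lambda>. smooth_fs UNIV (\<Phi> lam) \<and> (\<forall>q. \<Phi> lam q \<in> G)"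
    and \<Phi>_lsp: "\<forall>lam\<in>\<Lambda>. \<forall>q \<in> prolong \<Delta> \<inter> prolong \<Theta>. \<forall>\<alpha>.
                  totD \<alpha> (\<Phi> lam) q = U \<alpha> lam q ** \<Phi> lam q"
    and R_smooth: "\<forall>i. smooth_fs UNIV (R i)"
    and R_sym: "gen_symmetry \<Delta> R"
  shows "\<forall>lam\<in>\<Lambda>.
     smooth_fs UNIV (\<lambda>q. matrix_inv (\<Phi> lam q) ** prX R (\<Phi> lam) q) \<and>
     (\<forall>q \<in> prolong \<Delta> \<inter> prolong \<Theta>.
        matrix_inv (\<Phi> lam q) ** prX R (\<Phi> lam) q \<in> lie_algebra G \<and>
        (\<forall>\<alpha>. totD \<alpha> (\<lambda>q'. matrix_inv (\<Phi> lam q') ** prX R (\<Phi> lam) q') q =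
              matrix_inv (\<Phi> lam q) **
                (prX R (U \<alpha> lam) q +
                 prX R (\<lambda>q'. totD \<alpha> (\<Phi> lam) q' - U \<alpha> lam q' ** \<Phi> lam q') q ** matrix_inv (\<Phi> lam q))
              ** \<Phi> lam q))"
proof -
  have \<Phi>: "smooth_fs UNIV (\<Phi> lam)" "\<And>q. \<Phi> lam q \<in> G" "\<And>q. invertible (\<Phi> lam q)" if "lam \<in> \<Lambda>" for lam
    using \<Phi>_G G that by (auto simp: matrix_lie_group_def)
  show ?thesis
  proof (intro ballI conjI allI, goal_cases)
    case (1 lam)
    then show ?case
      using \<Phi> R_smooth by (intro smooth_fs_matrix_mult smooth_fs_matrix_inv smooth_fs_prX) auto
  next
    case (2 lam q)
    then show ?case
      using \<Phi> by (intro matrix_inv_mult_prX_in_lie_algebra[OF G] smooth_fs_partially_differentiable) auto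
  next
    case (3 lam q \<alpha>)
    then show ?case
      using \<Phi> U_form \<Phi>_lsp R_smooth by (intro totD_matrix_inv_mult_prX) auto
  qed
qed

end
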